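(* (a) (Quasilinear case) Assume (M), (J1), (J2) and (F4). If $u:\mathbb{R}^N\to\mathbb{R}$ is a bounded upper semicontinuous viscosity subsolution of (Q) and $v:\mathbb{R}^N\to\mathbb{R}$ is a bounded lower semicontinuous viscosity supersolution of (Q), then $u\le v$ in $\mathbb{R}^N$. (b) (Fully nonlinear case) Assume (M), (J1), (J2) and (F1)–(F4). If $u:\mathbb{R}^N\to\mathbb{R}$ is a bounded upper semicontinuous viscosity subsolution of (E) and $v:\mathbb{R}^N\to\mathbb{R}$ is a bounded lower semicontinuous viscosity supersolution of (E), then $u\le v$ in $\mathbb{R}^N$.
   Context: Let $N,P\ge1$. Let $\mu_1,\mu_2$ be non-negative Radon measures on $\mathbb{R}^P\setminus\{0\}$, $j_1,j_2:\mathbb{R}^N\times\mathbb{R}^P\to\mathbb{R}^N$ Borel measurable, $F:\mathbb{R}\times\mathbb{R}^N\times\mathbb{R}\to\mathbb{R}$, $f:\mathbb{R}^N\to\mathbb{R}$. For a bounded measurable $u$ on $\mathbb{R}^N$, $p,x\in\mathbb{R}^N$, set $L_1[u,p](x)=\int_{|z|>0}\big(u(x+j_1(p,z))-u(x)-j_1(p,z)\cdot p\big)\,d\mu_1(z)$, $L_2[u,p](x)=\int_{|z|>0}\big(u(x+j_2(p,z))-u(x)\big)\,d\mu_2(z)$, and for $\delta>0$: $L_\delta[\phi,D\phi](x)$ = the $L_1$-integral with $p=D\phi(x)$ restricted to $0<|z|<\delta$, $L^\delta[u,p](x)$ = the $L_1$-integral restricted to $|z|\ge\delta$. Write $L[u,Du](x)=L_1[u,Du(x)](x)+L_2[u,Du(x)](x)$.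 Equations: (E) $F(u,Du,L[u,Du])=f$ in $\mathbb{R}^N$; (Q) $-L[u,Du]+u=f$ in $\mathbb{R}^N$ (i.e. (E) with $F(u,p,\ell)=u-\ell$). A modulus of continuity is a subadditive $\omega:[0,\infty)\to[0,\infty)$ with $\omega(s)\to0$ as $s\to0^+$. (M): $\int_{|z|>0}|z|^2d\mu_1+\int_{|z|>0}d\mu_2<\infty$. (J1): $j_1,j_2$ are continuous in $p$ for a.e. $z$, and for each $r>0$ there is $C_{j,r}$ with $\int_{|z|>0}|j_1(p,z)|^2d\mu_1(z)\le C_{j,r}$ for all $|p|<r$. (J2): for each $r>0$ there is a modulus $\omega_{j,r}$ with $\int_{|z|>0}|j_1(p,z)-j_1(q,z)|^2d\mu_1(z)\le\omega_{j,r}(|p-q|)$ for $|p|,|q|<r$. (F1): $F$ is continuous and $F(u,p,\ell)\ge F(u,p,\ell')$ whenever $\ell\le\ell'$. (F2): for every $M>0$ there is $\gamma_M>0$ with $F(u,p,\ell)-F(v,p,\ell)\ge\gamma_M(u-v)$ for all $p,\ell$ and $-M\le v\le u\le M$. (F3): for every $M,r>0$ there is a modulus $\omega_{M,r}$ with $|F(u,p,\ell)-F(u,q,\ell')|\le\omega_{M,r}(|p-q|+|\ell-\ell'|)$ for $|u|\le M$, $|p|,|q|,|\ell|,|\ell'|\le r$. (F4): $f$ is uniformly continuous on $\mathbb{R}^N$. Viscosity solutions: a bounded usc $u$ is a subsolution of (E) if for every $\delta>0$, every $C^2$ function $\phi$ and every global maximum point $x$ of $u-\phi$: $F\big(u(x),D\phi(x),L_\delta[\phi,D\phi](x)+L^\delta[u,D\phi(x)](x)+L_2[u,D\phi(x)](x)\big)\le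 f(x)$. A bounded lsc $u$ is a supersolution if the reverse inequality $\ge$ holds at every global minimum point of $u-\phi$. A viscosity solution is a bounded continuous function that is both. *)

theory Defs
  imports "HOL-Analysis.Analysis"
begin

definition usc :: "('a::topological_space \<Rightarrow> real) \<Rightarrow> bool" where
  "usc u \<longleftrightarrow> (\<forall>t. open {x. u x < t})"

definition lsc :: "('a::topological_space \<Rightarrow> real) \<Rightarrow> bool" where
  "lsc u \<longleftrightarrow> (\<forall>t. open {x. t < u x})"

definition modulus :: "(real \<Rightarrow> real) \<Rightarrow> bool" where
  "modulus \<omega> \<longleftrightarrow> (\<forall>s\<ge>0. \<omega> s \<ge> 0)
     \<and> (\<forall>s\<ge>0. \<forall>t\<ge>0. \<omega> (s + t) \<le> \<omega> s + \<omega> t)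
     \<and> (\<omega> \<longlongrightarrow> 0) (at_right 0)"

definition C2_grad :: "('n::euclidean_space \<Rightarrow> real) \<Rightarrow> ('n \<Rightarrow> 'n) \<Rightarrow> bool" where
  "C2_grad \<phi> D\<phi> \<longleftrightarrow> (\<forall>x. (\<phi> has_derivative (\<lambda>h. D\<phi> x \<bullet> h)) (at x))
     \<and> (\<exists>D2 :: 'n \<Rightarrow> ('n \<Rightarrow>\<^sub>L 'n). (\<forall>x. (D\<phi> has_derivative blinfun_apply (D2 x)) (at x))
                                 \<and> continuous_on UNIV D2)"

text \<open>Non-negative Radon measure on R^P minus {0}, encoded as a Borel measure on R^P
  giving no mass to {0} and finite mass to compact sets avoiding 0.\<close>
definition radon_punctured :: "'z::euclidean_space measure \<Rightarrow> bool" where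
  "radon_punctured \<mu> \<longleftrightarrow> sets \<mu> = sets borel \<and> emeasure \<mu> {0} = 0
     \<and> (\<forall>K. compact K \<and> 0 \<notin> K \<longrightarrow> emeasure \<mu> K < \<infinity>)"

definition L_small :: "'z::euclidean_space measure \<Rightarrow> ('n::euclidean_space \<Rightarrow> 'z \<Rightarrow> 'n)
    \<Rightarrow> real \<Rightarrow> ('n \<Rightarrow> real) \<Rightarrow> 'n \<Rightarrow> 'n \<Rightarrow> real" where
  "L_small \<mu>1 j1 \<delta> \<phi> p x =
     (LINT z : {z. 0 < norm z \<and> norm z < \<delta>} | \<mu>1. \<phi> (x + j1 p z) - \<phi> x - j1 p z \<bullet> p)"

definition L_big :: "'z::euclidean_space measure \<Rightarrow> ('n::euclidean_space \<Rightarrow> 'z \<Rightarrow> 'n)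
    \<Rightarrow> real \<Rightarrow> ('n \<Rightarrow> real) \<Rightarrow> 'n \<Rightarrow> 'n \<Rightarrow> real" where
  "L_big \<mu>1 j1 \<delta> u p x =
     (LINT z : {z. \<delta> \<le> norm z} | \<mu>1. u (x + j1 p z) - u x - j1 p z \<bullet> p)"

definition L_two :: "'z::euclidean_space measure \<Rightarrow> ('n::euclidean_space \<Rightarrow> 'z \<Rightarrow> 'n)
    \<Rightarrow> ('n \<Rightarrow> real) \<Rightarrow> 'n \<Rightarrow> 'n \<Rightarrow> real" where
  "L_two \<mu>2 j2 u p x = (LINT z : {z. 0 < norm z} | \<mu>2. u (x + j2 p z) - u x)"

definition visc_sub ::
  "(real \<Rightarrow> 'n::euclidean_space \<Rightarrow> real \<Rightarrow> real) \<Rightarrow> ('n \<Rightarrow> real)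
   \<Rightarrow> 'z::euclidean_space measure \<Rightarrow> 'z measure \<Rightarrow> ('n \<Rightarrow> 'z \<Rightarrow> 'n) \<Rightarrow> ('n \<Rightarrow> 'z \<Rightarrow> 'n)
   \<Rightarrow> ('n \<Rightarrow> real) \<Rightarrow> bool" where
  "visc_sub F f \<mu>1 \<mu>2 j1 j2 u \<longleftrightarrow> bounded (range u) \<and> usc u \<and>
     (\<forall>\<delta>>0. \<forall>\<phi> D\<phi> x. C2_grad \<phi> D\<phi> \<longrightarrow> (\<forall>y. u y - \<phi> y \<le> u x - \<phi> x) \<longrightarrow>
        F (u x) (D\<phi> x) (L_small \<mu>1 j1 \<delta> \<phi> (D\<phi> x) x + L_big \<mu>1 j1 \<delta> u (D\<phi> x) x
                          + L_two \<mu>2 j2 u (D\<phi> x) x) \<le> f x)"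

definition visc_super ::
  "(real \<Rightarrow> 'n::euclidean_space \<Rightarrow> real \<Rightarrow> real) \<Rightarrow> ('n \<Rightarrow> real)
   \<Rightarrow> 'z::euclidean_space measure \<Rightarrow> 'z measure \<Rightarrow> ('n \<Rightarrow> 'z \<Rightarrow> 'n) \<Rightarrow> ('n \<Rightarrow> 'z \<Rightarrow> 'n)
   \<Rightarrow> ('n \<Rightarrow> real) \<Rightarrow> bool" where
  "visc_super F f \<mu>1 \<mu>2 j1 j2 v \<longleftrightarrow> bounded (range v) \<and> lsc v \<and>
     (\<forall>\<delta>>0. \<forall>\<phi> D\<phi> x. C2_grad \<phi> D\<phi> \<longrightarrow> (\<forall>y. v x - \<phi> x \<le> v y - \<phi> y) \<longrightarrow>
        F (v x) (D\<phi> x) (L_small \<mu>1 j1 \<delta> \<phi> (D\<phi> x) x + L_big \<mu>1 j1 \<delta> v (D\<phi> x) x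
                          + L_two \<mu>2 j2 v (D\<phi> x) x) \<ge> f x)"

definition hypM :: "'z::euclidean_space measure \<Rightarrow> 'z measure \<Rightarrow> bool" where
  "hypM \<mu>1 \<mu>2 \<longleftrightarrow> (\<integral>\<^sup>+ z \<in> {z. 0 < norm z}. ennreal ((norm z)\<^sup>2) \<partial>\<mu>1)
                     + emeasure \<mu>2 {z. 0 < norm z} < \<infinity>"

definition hypJ1 :: "'z::euclidean_space measure \<Rightarrow> 'z measure
    \<Rightarrow> ('n::euclidean_space \<Rightarrow> 'z \<Rightarrow> 'n) \<Rightarrow> ('n \<Rightarrow> 'z \<Rightarrow> 'n) \<Rightarrow> bool" where
  "hypJ1 \<mu>1 \<mu>2 j1 j2 \<longleftrightarrow>
     (AE z in \<mu>1. continuous_on UNIV (\<lambda>p. j1 p z)) \<and>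
     (AE z in \<mu>2. continuous_on UNIV (\<lambda>p. j2 p z)) \<and>
     (\<forall>r>0. \<exists>C::real. \<forall>p. norm p < r \<longrightarrow>
        (\<integral>\<^sup>+ z \<in> {z. 0 < norm z}. ennreal ((norm (j1 p z))\<^sup>2) \<partial>\<mu>1) \<le> ennreal C)"

definition hypJ2 :: "'z::euclidean_space measure \<Rightarrow> ('n::euclidean_space \<Rightarrow> 'z \<Rightarrow> 'n) \<Rightarrow> bool" where
  "hypJ2 \<mu>1 j1 \<longleftrightarrow>
     (\<forall>r>0. \<exists>\<omega>. modulus \<omega> \<and> (\<forall>p q. norm p < r \<and> norm q < r \<longrightarrow>
        (\<integral>\<^sup>+ z \<in> {z. 0 < norm z}. ennreal ((norm (j1 p z - j1 q z))\<^sup>2) \<partial>\<mu>1)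
          \<le> ennreal (\<omega> (norm (p - q)))))"

definition hypF1 :: "(real \<Rightarrow> 'n::euclidean_space \<Rightarrow> real \<Rightarrow> real) \<Rightarrow> bool" where
  "hypF1 F \<longleftrightarrow> continuous_on UNIV (\<lambda>(u, p, l). F u p l)
     \<and> (\<forall>u p l l'. l \<le> l' \<longrightarrow> F u p l \<ge> F u p l')"

definition hypF2 :: "(real \<Rightarrow> 'n::euclidean_space \<Rightarrow> real \<Rightarrow> real) \<Rightarrow> bool" where
  "hypF2 F \<longleftrightarrow> (\<forall>M>0. \<exists>\<gamma>>0. \<forall>u v p l. -M \<le> v \<and> v \<le> u \<and> u \<le> M \<longrightarrow>
                     F u p l - F v p l \<ge> \<gamma> * (u - v))"

definition hypF3 :: "(real \<Rightarrow> 'n::euclidean_space \<Rightarrow> real \<Rightarrow> real) \<Rightarrow> bool" where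
  "hypF3 F \<longleftrightarrow> (\<forall>M>0. \<forall>r>0. \<exists>\<omega>. modulus \<omega> \<and>
     (\<forall>u p q l l'. \<bar>u\<bar> \<le> M \<and> norm p \<le> r \<and> norm q \<le> r \<and> \<bar>l\<bar> \<le> r \<and> \<bar>l'\<bar> \<le> r \<longrightarrow>
        \<bar>F u p l - F u q l'\<bar> \<le> \<omega> (norm (p - q) + \<bar>l - l'\<bar>)))"

definition hypF4 :: "('n::euclidean_space \<Rightarrow> real) \<Rightarrow> bool" where
  "hypF4 f \<longleftrightarrow> uniformly_continuous_on UNIV f"

end

theory Submission
  imports Defs
begin

text \<open>
  The proof doubles the variables. If \<open>m = u x\<^sub>0 - v x\<^sub>0 > 0\<close>, maximise
  \<open>u x - v y - \<kappa> |x - y|\<^sup>2 - \<beta> (|x|\<^sup>2 + |y|\<^sup>2)\<close> with \<open>\<kappa>\<close> fixed by the modulus of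
  continuity of \<open>f\<close> and \<open>\<beta> \<rightarrow> 0\<close>. At a maximum \<open>(X, Y)\<close> the penalty, as a function of one
  variable, is a quadratic test function for \<open>u\<close> at \<open>X\<close> and for \<open>v\<close> at \<open>Y\<close>; the two gradients
  differ by \<open>2\<beta> (X + Y) \<rightarrow> 0\<close>. Maximality of \<open>(X, Y)\<close> bounds the difference of the
  nonlocal terms by three errors: small jumps (square integrability of \<open>j\<^sub>1\<close> near \<open>0\<close>),
  large jumps of \<open>\<mu>\<^sub>1\<close> (assumption (J2)) and the finite measure \<open>\<mu>\<^sub>2\<close> (dominated
  convergence, using the continuity of \<open>j\<^sub>2\<close>). The monotonicity and continuity of \<open>F\<close> then
  give \<open>\<gamma> m / 2 \<le> f X - f Y + o(1)\<close>, which contradicts \<open>|X - Y| < d\<close>.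
\<close>

section \<open>Semicontinuous functions\<close>

lemma usc_borel_measurable:
  fixes u :: "'a::topological_space \<Rightarrow> real"
  shows "usc u \<Longrightarrow> u \<in> borel_measurable borel"
  unfolding borel_measurable_iff_less usc_def by auto

lemma lsc_borel_measurable:
  fixes u :: "'a::topological_space \<Rightarrow> real"
  shows "lsc u \<Longrightarrow> u \<in> borel_measurable borel"
  unfolding borel_measurable_iff_greater lsc_def by auto

lemma usc_uminus_iff: "usc (\<lambda>x. - v x) \<longleftrightarrow> lsc v"
proof -
  have "{x. - v x < t} = {x. - t < v x}" for t by auto
  then show ?thesis
    unfolding usc_def lsc_def by (metis minus_minus)
qed

lemma continuous_imp_usc: "continuous_on UNIV g \<Longrightarrow> usc g"
  unfolding usc_def by (auto intro: open_Collect_less continuous_intros)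

lemma usc_compose_continuous:
  assumes "usc u" and "continuous_on UNIV h"
  shows "usc (\<lambda>x. u (h x))"
proof -
  have "open (h -` {y. u y < t})" for t
    using assms unfolding usc_def by (intro open_vimage) auto
  then show ?thesis
    unfolding usc_def vimage_def by simp
qed

lemma usc_add:
  assumes "usc g" and "usc h"
  shows "usc (\<lambda>x. g x + h x)"
  unfolding usc_def
proof
  fix t
  have "{x. g x + h x < t} = (\<Union>s. {x. g x < s} \<inter> {x. h x < t - s})"
  proof safe
    fix x assume "g x + h x < t"
    then show "x \<in> (\<Union>s. {x. g x < s} \<inter> {x. h x < t - s})"
      by (intro UN_I[of "g x + (t - g x - h x)/2"]) (auto simp: field_simps)
  qed auto
  then show "open {x. g x + h x < t}"
    using assms unfolding usc_def by (auto intro!: open_UN open_Int)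
qed

lemma usc_attains_max_on_compact:
  assumes "usc g" and "compact K" and "K \<noteq> {}"
  shows "\<exists>x\<in>K. \<forall>y\<in>K. g y \<le> g x"
proof (rule ccontr)
  assume "\<not> ?thesis"
  then have "K \<subseteq> (\<Union>y\<in>K. {x. g x < g y})"
    by (auto simp: not_le)
  from compactE_image[OF assms(2) _ this] obtain D
    where D: "D \<subseteq> K" "finite D" "K \<subseteq> (\<Union>y\<in>D. {x. g x < g y})"
    using assms(1) unfolding usc_def by metis
  then have "D \<noteq> {}"
    using assms(3) by auto
  with D have "Max (g ` D) \<in> g ` D"
    by (intro Max_in) auto
  then obtain y where y: "y \<in> D" "g y = Max (g ` D)"
    by auto
  then obtain y' where y': "y' \<in> D" "g y < g y'"
    using D(1,3) by blast
  have "g y' \<le> g y"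
    using D(2) y y' by simp
  with y' show False
    by simp
qed

lemma usc_attains_max:
  fixes g :: "'a::{heine_borel,real_normed_vector} \<Rightarrow> real"
  assumes "usc g" and outside: "\<And>y. R < norm y \<Longrightarrow> g y < g x0"
  shows "\<exists>x. \<forall>y. g y \<le> g x"
proof -
  have x0: "x0 \<in> cball 0 R"
    using outside[of x0] by force
  then obtain x where x: "\<forall>y\<in>cball 0 R. g y \<le> g x"
    using usc_attains_max_on_compact[OF assms(1) compact_cball] by blast
  have "g y \<le> g x" for y
  proof (cases "y \<in> cball 0 R")
    case False
    then have "g y < g x0"
      by (intro outside) (simp add: mem_cball)
    with x x0 show ?thesis
      by fastforce
  qed (use x in blast)
  then show ?thesis
    by blast
qed

lemma modulus_eventually_small:
  assumes "modulus \<omega>" and "0 < e"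
  obtains s0 where "0 < s0" "\<And>s. 0 < s \<Longrightarrow> s < s0 \<Longrightarrow> \<omega> s < e"
proof -
  have "\<forall>\<^sub>F s in at_right 0. \<omega> s < e"
    using assms unfolding modulus_def by (auto dest: order_tendstoD(2))
  then obtain s0 where "0 < s0" "\<And>s. 0 < s \<Longrightarrow> s < s0 \<Longrightarrow> \<omega> s < e"
    unfolding eventually_at_right_field by auto
  with that show ?thesis .
qed

lemma (in bounded_bilinear) tendsto_zero_if_Bseq_left:
  "Bseq X \<Longrightarrow> a \<longlonglongrightarrow> 0 \<Longrightarrow> (\<lambda>n. prod (X n) (a n)) \<longlonglongrightarrow> 0"
  using Bfun_prod_Zfun[of X sequentially a] by (simp add: tendsto_Zfun_iff)

lemma (in bounded_bilinear) tendsto_zero_if_Bseq_right: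
  "a \<longlonglongrightarrow> 0 \<Longrightarrow> Bseq X \<Longrightarrow> (\<lambda>n. prod (a n) (X n)) \<longlonglongrightarrow> 0"
  using Zfun_prod_Bfun[of a sequentially X] by (simp add: tendsto_Zfun_iff)

lemma scaleR_tendsto_zero_if_weighted_square_bounded:
  fixes X :: "nat \<Rightarrow> 'a::real_normed_vector"
  assumes \<beta>_nonneg: "\<And>n. 0 \<le> \<beta> n" and "\<beta> \<longlonglongrightarrow> 0" and bound: "\<And>n. \<beta> n * (norm (X n))\<^sup>2 \<le> C"
  shows "(\<lambda>n. \<beta> n *\<^sub>R X n) \<longlonglongrightarrow> 0"
proof -
  have le: "norm (\<beta> n *\<^sub>R X n) \<le> sqrt (C * \<beta> n)" for n
  proof (rule real_le_rsqrt)
    have "(norm (\<beta> n *\<^sub>R X n))\<^sup>2 = \<beta> n * (\<beta> n * (norm (X n))\<^sup>2)"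
      using \<beta>_nonneg[of n] by (simp add: power2_eq_square)
    also have "\<dots> \<le> \<beta> n * C"
      by (rule mult_left_mono[OF bound \<beta>_nonneg])
    finally show "(norm (\<beta> n *\<^sub>R X n))\<^sup>2 \<le> C * \<beta> n"
      by (simp add: mult.commute)
  qed
  have lim: "(\<lambda>n. sqrt (C * \<beta> n)) \<longlonglongrightarrow> 0"
    using tendsto_real_sqrt[OF tendsto_mult_right_zero[OF \<open>\<beta> \<longlonglongrightarrow> 0\<close>, of C]] by simp
  have "(\<lambda>n. norm (\<beta> n *\<^sub>R X n)) \<longlonglongrightarrow> 0"
    by (rule tendsto_sandwich[of "\<lambda>_. 0" _ _ "\<lambda>n. sqrt (C * \<beta> n)"]) (use le lim in auto)
  then show ?thesis
    by (rule tendsto_norm_zero_cancel)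
qed

lemma continuous_on_diff_tendsto_zero:
  fixes g :: "'a::euclidean_space \<Rightarrow> 'b::real_normed_vector"
  assumes "continuous_on UNIV g" "\<And>n. norm (p n) \<le> R" "\<And>n. norm (q n) \<le> R"
    and "(\<lambda>n. p n - q n) \<longlonglongrightarrow> 0"
  shows "(\<lambda>n. g (p n) - g (q n)) \<longlonglongrightarrow> 0"
proof -
  have "uniformly_continuous_on (cball 0 R) g"
    using assms(1) by (intro compact_uniformly_continuous) (auto intro: continuous_on_subset)
  moreover have "(\<lambda>n. dist (p n) (q n)) \<longlonglongrightarrow> 0"
    using assms(4) by (simp add: dist_norm tendsto_norm_zero_iff)
  ultimately have "(\<lambda>n. dist (g (p n)) (g (q n))) \<longlonglongrightarrow> 0"
    using assms(2,3) unfolding uniformly_continuous_on_sequentially by (simp add: mem_cball)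
  then show ?thesis
    by (simp add: dist_norm tendsto_norm_zero_iff)
qed

lemma continuous_on_Bseq:
  fixes g :: "'a::euclidean_space \<Rightarrow> 'b::real_normed_vector"
  assumes "continuous_on UNIV g" "\<And>n. norm (p n) \<le> R"
  shows "Bseq (\<lambda>n. g (p n))"
proof -
  have "compact (g ` cball 0 R)"
    using assms(1) by (intro compact_continuous_image) (auto intro: continuous_on_subset)
  then obtain B where "\<And>y. y \<in> g ` cball 0 R \<Longrightarrow> norm y \<le> B"
    using compact_imp_bounded bounded_iff by metis
  then show ?thesis
    using assms(2) by (intro BseqI'[of _ B]) (simp add: mem_cball)
qed

lemma norm_lt_if_scaled_square_le:
  assumes "0 \<le> K" "0 < d" "(4 * K + 1) / d\<^sup>2 * (norm x)\<^sup>2 \<le> 2 * K"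
  shows "norm x < d"
proof -
  have "(4 * K + 1) * (norm x)\<^sup>2 = d\<^sup>2 * ((4 * K + 1) / d\<^sup>2 * (norm x)\<^sup>2)"
    using assms(2) by simp
  also have "\<dots> \<le> d\<^sup>2 * (2 * K)"
    using assms(3) by (rule mult_left_mono) simp
  also have "\<dots> < (4 * K + 1) * d\<^sup>2"
    using assms(1,2) by (simp add: algebra_simps add_pos_nonneg)
  finally have "(norm x)\<^sup>2 < d\<^sup>2"
    using assms(1) by (simp add: mult_less_cancel_left_pos add_nonneg_pos)
  then show ?thesis
    using assms(2) by (simp add: power_less_imp_less_base)
qed

section \<open>Doubling of variables\<close>

definition doubling_penalty :: "real \<Rightarrow> real \<Rightarrow> 'a::real_normed_vector \<Rightarrow> 'a \<Rightarrow> real" where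
  "doubling_penalty \<kappa> \<beta> x y = \<kappa> * (norm (x - y))\<^sup>2 + \<beta> * ((norm x)\<^sup>2 + (norm y)\<^sup>2)"

lemma doubling_penalty_nonneg: "0 \<le> \<kappa> \<Longrightarrow> 0 \<le> \<beta> \<Longrightarrow> 0 \<le> doubling_penalty \<kappa> \<beta> x y"
  unfolding doubling_penalty_def by simp

lemma doubling_max_exists:
  fixes u v :: "'a::euclidean_space \<Rightarrow> real"
  assumes "usc u" "lsc v" and u_bound: "\<And>x. \<bar>u x\<bar> \<le> K" and v_bound: "\<And>x. \<bar>v x\<bar> \<le> K"
    and "0 \<le> \<kappa>" "0 < \<beta>"
  shows "\<exists>X Y. \<forall>x y. u x - v y - doubling_penalty \<kappa> \<beta> x y \<le> u X - v Y - doubling_penalty \<kappa> \<beta> X Y"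
proof -
  define g where "g z = u (fst z) - v (snd z) - doubling_penalty \<kappa> \<beta> (fst z) (snd z)" for z :: "'a \<times> 'a"
  have "usc (\<lambda>z. u (fst z))"
    using usc_compose_continuous[OF assms(1) continuous_on_fst[OF continuous_on_id]] .
  moreover have "usc (\<lambda>z. - v (snd z))"
    using usc_compose_continuous[of "\<lambda>y. - v y" snd] assms(2)
    by (simp add: usc_uminus_iff continuous_on_snd[OF continuous_on_id])
  ultimately have "usc (\<lambda>z. u (fst z) + - v (snd z))"
    by (rule usc_add)
  moreover have "usc (\<lambda>z. - doubling_penalty \<kappa> \<beta> (fst z) (snd z))"
    unfolding doubling_penalty_def by (intro continuous_imp_usc continuous_intros)
  ultimately have "usc g"
    using usc_add unfolding g_def diff_conv_add_uminus by blast
  moreover have "g z < g (0, 0)" if z: "(2*K + \<bar>g (0, 0)\<bar> + 1) / \<beta> + 1 < norm z" for z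
  proof -
    obtain a c where ac: "z = (a, c)" by (cases z)
    have "0 \<le> (2*K + \<bar>g (0, 0)\<bar> + 1) / \<beta>"
      using u_bound[of 0] \<open>0 < \<beta>\<close> by simp
    with z have "1 \<le> norm z"
      by linarith
    then have "norm z \<le> (norm z)\<^sup>2"
      using mult_right_mono[of 1 "norm z" "norm z"] by (simp add: power2_eq_square)
    with z have "(2*K + \<bar>g (0, 0)\<bar> + 1) / \<beta> < (norm a)\<^sup>2 + (norm c)\<^sup>2"
      unfolding ac norm_Pair by simp
    then have "2*K + \<bar>g (0, 0)\<bar> + 1 < \<beta> * ((norm a)\<^sup>2 + (norm c)\<^sup>2)"
      using \<open>0 < \<beta>\<close> by (simp add: field_simps)
    moreover have "u a - v c \<le> 2*K"
      using u_bound[of a] v_bound[of c] by linarith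
    moreover have "0 \<le> \<kappa> * (norm (a - c))\<^sup>2"
      using \<open>0 \<le> \<kappa>\<close> by simp
    ultimately show ?thesis
      unfolding g_def ac doubling_penalty_def by simp
  qed
  ultimately obtain z where "\<forall>y. g y \<le> g z"
    using usc_attains_max by blast
  then show ?thesis
    unfolding g_def by (metis fst_conv snd_conv)
qed

lemma vanishing_weights_exist:
  fixes m t :: real
  assumes "0 < m" "0 \<le> t"
  obtains \<beta> :: "nat \<Rightarrow> real" where "\<And>n. 0 < \<beta> n" "\<And>n. \<beta> n \<le> 1" "\<beta> \<longlonglongrightarrow> 0" "\<And>n. \<beta> n * t \<le> m"
proof
  define b where "b = min 1 (m / (t + 1))"
  have "0 < b"
    using assms by (simp add: b_def)
  show "0 < b * inverse (real (Suc n))" "b * inverse (real (Suc n)) \<le> 1" for n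
    using \<open>0 < b\<close> by (auto simp: b_def field_simps)
  show "(\<lambda>n. b * inverse (real (Suc n))) \<longlonglongrightarrow> 0"
    by (rule tendsto_mult_right_zero[OF LIMSEQ_inverse_real_of_nat])
  have "b * t \<le> m / (t + 1) * t"
    unfolding b_def using assms(2) by (intro mult_right_mono) auto
  also have "\<dots> \<le> m"
    using assms by (simp add: field_simps)
  finally have "b * t \<le> m" .
  moreover have "b * inverse (real (Suc n)) * t \<le> b * t" for n
  proof -
    have "t * inverse (real (Suc n)) \<le> t"
      using assms(2) by (intro mult_left_le) (simp_all add: inverse_le_1_iff)
    then show ?thesis
      using \<open>0 < b\<close> by (simp add: algebra_simps)
  qed
  ultimately show "b * inverse (real (Suc n)) * t \<le> m" for n
    by (meson order_trans)
qed

lemma doubling_penalty_bounded_imp_tendsto: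
  fixes X Y :: "nat \<Rightarrow> 'a::real_normed_vector"
  assumes "\<And>n. 0 < \<beta> n" "\<beta> \<longlonglongrightarrow> 0" "0 \<le> \<kappa>" "\<And>n. doubling_penalty \<kappa> (\<beta> n) (X n) (Y n) \<le> C"
  shows "(\<lambda>n. \<beta> n *\<^sub>R X n) \<longlonglongrightarrow> 0" "(\<lambda>n. \<beta> n *\<^sub>R Y n) \<longlonglongrightarrow> 0"
proof -
  have nonneg: "0 \<le> \<kappa> * (norm (X n - Y n))\<^sup>2" "0 \<le> \<beta> n * (norm (X n))\<^sup>2"
    "0 \<le> \<beta> n * (norm (Y n))\<^sup>2" for n
    using assms(1,3) by (simp_all add: less_imp_le)
  have "\<beta> n * (norm (X n))\<^sup>2 \<le> C" "\<beta> n * (norm (Y n))\<^sup>2 \<le> C" for n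
    using nonneg[of n] assms(4)[of n] unfolding doubling_penalty_def distrib_left by linarith+
  then show "(\<lambda>n. \<beta> n *\<^sub>R X n) \<longlonglongrightarrow> 0" "(\<lambda>n. \<beta> n *\<^sub>R Y n) \<longlonglongrightarrow> 0"
    using scaleR_tendsto_zero_if_weighted_square_bounded[OF less_imp_le[OF assms(1)] assms(2)] by blast+
qed

lemma doubled_maxima_sequence:
  fixes u v :: "'a::euclidean_space \<Rightarrow> real"
  assumes "usc u" "lsc v" and u_bound: "\<And>x. \<bar>u x\<bar> \<le> K" and v_bound: "\<And>x. \<bar>v x\<bar> \<le> K"
    and "0 \<le> \<kappa>" and "v x0 < u x0"
  obtains \<beta> :: "nat \<Rightarrow> real" and X Y :: "nat \<Rightarrow> 'a"
  where "\<And>n. 0 < \<beta> n" "\<And>n. \<beta> n \<le> 1" "\<beta> \<longlonglongrightarrow> 0"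
    and "\<And>n x y. u x - v y - doubling_penalty \<kappa> (\<beta> n) x y
                  \<le> u (X n) - v (Y n) - doubling_penalty \<kappa> (\<beta> n) (X n) (Y n)"
    and "\<And>n. (u x0 - v x0) / 2 \<le> u (X n) - v (Y n) - doubling_penalty \<kappa> (\<beta> n) (X n) (Y n)"
    and "(\<lambda>n. \<beta> n *\<^sub>R X n) \<longlonglongrightarrow> 0" "(\<lambda>n. \<beta> n *\<^sub>R Y n) \<longlonglongrightarrow> 0"
proof -
  define m where "m = u x0 - v x0"
  then have "0 < m / 4"
    using \<open>v x0 < u x0\<close> by simp
  \<comment> \<open>the weights keep the penalty at \<open>(x0, x0)\<close>, namely \<open>2 \<beta> |x0|\<^sup>2\<close>, below \<open>m / 2\<close>\<close>
  then obtain \<beta> where \<beta>_pos: "\<And>n. 0 < \<beta> n" and \<beta>_le_1: "\<And>n. \<beta> n \<le> 1" and \<beta>_lim: "\<beta> \<longlonglongrightarrow> 0"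
    and \<beta>_x0: "\<And>n. \<beta> n * (norm x0)\<^sup>2 \<le> m / 4"
    using vanishing_weights_exist[of "m / 4" "(norm x0)\<^sup>2"] by auto
  have "\<forall>n. \<exists>X Y. \<forall>x y. u x - v y - doubling_penalty \<kappa> (\<beta> n) x y
                  \<le> u X - v Y - doubling_penalty \<kappa> (\<beta> n) X Y"
    using doubling_max_exists[OF assms(1-5) \<beta>_pos] by blast
  from choice[OF this] obtain X where "\<forall>n. \<exists>Y. \<forall>x y. u x - v y - doubling_penalty \<kappa> (\<beta> n) x y
                  \<le> u (X n) - v Y - doubling_penalty \<kappa> (\<beta> n) (X n) Y" ..
  from choice[OF this] obtain Y where "\<forall>n x y. u x - v y - doubling_penalty \<kappa> (\<beta> n) x y
                  \<le> u (X n) - v (Y n) - doubling_penalty \<kappa> (\<beta> n) (X n) (Y n)" ..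
  then have is_max: "\<And>n x y. u x - v y - doubling_penalty \<kappa> (\<beta> n) x y
                  \<le> u (X n) - v (Y n) - doubling_penalty \<kappa> (\<beta> n) (X n) (Y n)"
    by blast
  have gap: "m / 2 \<le> u (X n) - v (Y n) - doubling_penalty \<kappa> (\<beta> n) (X n) (Y n)" for n
    using is_max[where n=n and x=x0 and y=x0] \<beta>_x0[of n] by (simp add: doubling_penalty_def m_def)
  have "doubling_penalty \<kappa> (\<beta> n) (X n) (Y n) \<le> 2 * K" for n
    using gap[of n] \<open>0 < m / 4\<close> u_bound[of "X n"] v_bound[of "Y n"] by (simp add: abs_le_iff)
  then have "(\<lambda>n. \<beta> n *\<^sub>R X n) \<longlonglongrightarrow> 0" "(\<lambda>n. \<beta> n *\<^sub>R Y n) \<longlonglongrightarrow> 0"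
    using doubling_penalty_bounded_imp_tendsto[OF \<beta>_pos \<beta>_lim \<open>0 \<le> \<kappa>\<close>] by blast+
  then show ?thesis
    using that[OF \<beta>_pos \<beta>_le_1 \<beta>_lim is_max gap[unfolded m_def]] by blast
qed

lemma doubled_max_close:
  fixes X Y :: "'a::real_normed_vector"
  assumes "0 \<le> K" "0 < d" "0 \<le> \<beta>" "a - b \<le> 2 * K"
    and "m \<le> a - b - doubling_penalty ((4 * K + 1) / d\<^sup>2) \<beta> X Y" "0 \<le> m"
  shows "m \<le> a - b" and "norm (X - Y) < d"
proof -
  have "0 \<le> (4 * K + 1) / d\<^sup>2 * (norm (X - Y))\<^sup>2" "0 \<le> \<beta> * ((norm X)\<^sup>2 + (norm Y)\<^sup>2)"
    using assms(1,3) by simp_all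
  with assms(4-6) have "m \<le> a - b" "(4 * K + 1) / d\<^sup>2 * (norm (X - Y))\<^sup>2 \<le> 2 * K"
    unfolding doubling_penalty_def by linarith+
  then show "m \<le> a - b" "norm (X - Y) < d"
    using norm_lt_if_scaled_square_le[OF assms(1,2)] by auto
qed

definition quad_test :: "real \<Rightarrow> real \<Rightarrow> 'a::real_normed_vector \<Rightarrow> 'a \<Rightarrow> real" where
  "quad_test c d a x = c * (norm (x - a))\<^sup>2 + d * (norm x)\<^sup>2"

definition quad_grad :: "real \<Rightarrow> real \<Rightarrow> 'a::real_vector \<Rightarrow> 'a \<Rightarrow> 'a" where
  "quad_grad c d a x = (2*c) *\<^sub>R (x - a) + (2*d) *\<^sub>R x"

lemma C2_grad_quad_test: "C2_grad (quad_test c d a) (quad_grad c d a)"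
  unfolding C2_grad_def quad_test_def quad_grad_def
proof (intro conjI allI exI[of _ "\<lambda>x. (2*c + 2*d) *\<^sub>R id_blinfun"])
  fix x :: 'a
  show "((\<lambda>x. c * (norm (x - a))\<^sup>2 + d * (norm x)\<^sup>2) has_derivative
      (\<lambda>h. ((2*c) *\<^sub>R (x - a) + (2*d) *\<^sub>R x) \<bullet> h)) (at x)"
    unfolding power2_norm_eq_inner
    by (auto intro!: derivative_eq_intros simp: algebra_simps inner_commute)
  show "((\<lambda>x. (2*c) *\<^sub>R (x - a) + (2*d) *\<^sub>R x) has_derivative
      blinfun_apply ((2*c + 2*d) *\<^sub>R id_blinfun)) (at x)"
    by (auto intro!: derivative_eq_intros
        simp: algebra_simps fun_eq_iff blinfun.add_left scaleR_blinfun.rep_eq)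
qed simp

lemma quad_test_increment:
  "quad_test c d a (x + h) - quad_test c d a x - h \<bullet> quad_grad c d a x = (c + d) * (norm h)\<^sup>2"
  unfolding quad_test_def quad_grad_def
  by (simp add: power2_norm_eq_inner inner_simps inner_commute algebra_simps)

lemma doubling_penalty_increment:
  "doubling_penalty \<kappa> \<beta> (X + a) (Y + b) - doubling_penalty \<kappa> \<beta> X Y
     - a \<bullet> quad_grad \<kappa> \<beta> Y X + b \<bullet> quad_grad (-\<kappa>) (-\<beta>) X Y
   = \<kappa> * (norm (a - b))\<^sup>2 + \<beta> * ((norm a)\<^sup>2 + (norm b)\<^sup>2)"
  unfolding doubling_penalty_def quad_grad_def
  by (simp add: power2_norm_eq_inner inner_simps inner_commute algebra_simps)

lemma doubling_penalty_increment_tendsto: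
  fixes X Y a b :: "nat \<Rightarrow> 'a::real_inner"
  assumes "Bseq (\<lambda>n. X n - Y n)" "Bseq a" "Bseq b" "(\<lambda>n. a n - b n) \<longlonglongrightarrow> 0"
    and "(\<lambda>n. \<beta> n *\<^sub>R X n) \<longlonglongrightarrow> 0" "(\<lambda>n. \<beta> n *\<^sub>R Y n) \<longlonglongrightarrow> 0" "\<beta> \<longlonglongrightarrow> 0"
  shows "(\<lambda>n. doubling_penalty \<kappa> (\<beta> n) (X n + a n) (Y n + b n)
              - doubling_penalty \<kappa> (\<beta> n) (X n) (Y n)) \<longlonglongrightarrow> 0"
proof -
  note inner_left = bounded_bilinear.tendsto_zero_if_Bseq_left[OF bounded_bilinear_inner]
  note inner_right = bounded_bilinear.tendsto_zero_if_Bseq_right[OF bounded_bilinear_inner]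
  note scaleR_right = bounded_bilinear.tendsto_zero_if_Bseq_right[OF bounded_bilinear_scaleR]
  have "(\<lambda>n. (X n - Y n) \<bullet> (a n - b n)) \<longlonglongrightarrow> 0"
    using inner_left[OF assms(1,4)] .
  moreover have "(\<lambda>n. (a n - b n) \<bullet> (a n - b n)) \<longlonglongrightarrow> 0"
    using tendsto_inner[OF assms(4) assms(4)] by simp
  moreover have "(\<lambda>n. (\<beta> n *\<^sub>R X n) \<bullet> a n) \<longlonglongrightarrow> 0" "(\<lambda>n. (\<beta> n *\<^sub>R Y n) \<bullet> b n) \<longlonglongrightarrow> 0"
    using inner_right[OF assms(5,2)] inner_right[OF assms(6,3)] .
  moreover have "(\<lambda>n. (\<beta> n *\<^sub>R a n) \<bullet> a n) \<longlonglongrightarrow> 0" "(\<lambda>n. (\<beta> n *\<^sub>R b n) \<bullet> b n) \<longlonglongrightarrow> 0"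
    using inner_right[OF scaleR_right[OF assms(7,2)] assms(2)]
      inner_right[OF scaleR_right[OF assms(7,3)] assms(3)] .
  ultimately have "(\<lambda>n. \<kappa> * (2 * ((X n - Y n) \<bullet> (a n - b n)) + (a n - b n) \<bullet> (a n - b n))
      + 2 * ((\<beta> n *\<^sub>R X n) \<bullet> a n) + (\<beta> n *\<^sub>R a n) \<bullet> a n
      + 2 * ((\<beta> n *\<^sub>R Y n) \<bullet> b n) + (\<beta> n *\<^sub>R b n) \<bullet> b n) \<longlonglongrightarrow>
      \<kappa> * (2 * 0 + 0) + 2 * 0 + 0 + 2 * 0 + 0"
    by (intro tendsto_add tendsto_mult tendsto_const)
  moreover have "doubling_penalty \<kappa> \<beta>' (X' + a') (Y' + b') - doubling_penalty \<kappa> \<beta>' X' Y'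
      = \<kappa> * (2 * ((X' - Y') \<bullet> (a' - b')) + (a' - b') \<bullet> (a' - b'))
        + 2 * ((\<beta>' *\<^sub>R X') \<bullet> a') + (\<beta>' *\<^sub>R a') \<bullet> a' + 2 * ((\<beta>' *\<^sub>R Y') \<bullet> b') + (\<beta>' *\<^sub>R b') \<bullet> b'"
    for \<beta>' and X' Y' a' b' :: 'a
    unfolding doubling_penalty_def
    by (simp add: power2_norm_eq_inner inner_simps inner_commute algebra_simps)
  ultimately show ?thesis
    by simp
qed

text \<open>Since \<open>F\<close> is nonincreasing in \<open>l\<close>, the two viscosity inequalities can be moved to
  \<open>l' \<ge> l1\<close> and \<open>l' - \<eta> \<le> l2\<close>, both in the range \<open>|l| \<le> r\<close> where \<open>cont\<close> applies.\<close>
lemma viscosity_inequalities_gap: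
  fixes F :: "real \<Rightarrow> 'n::euclidean_space \<Rightarrow> real \<Rightarrow> real"
  assumes "hypF1 F"
    and strict: "\<And>l. \<gamma> * (a - b) \<le> F a p l - F b p l"
    and cont: "\<And>l l'. \<bar>l\<bar> \<le> r \<Longrightarrow> \<bar>l'\<bar> \<le> r \<Longrightarrow> \<bar>l - l'\<bar> \<le> \<eta> \<Longrightarrow> \<bar>F b p l - F b q l'\<bar> \<le> \<epsilon>"
    and sub: "F a p l1 \<le> f1" and super: "f2 \<le> F b q l2"
    and "l1 \<le> l2 + \<eta>" "l1 \<le> A" "- A \<le> l2" "0 \<le> \<eta>" "0 \<le> A" "A + 2 * \<eta> \<le> r"
  shows "\<gamma> * (a - b) \<le> f1 - f2 + \<epsilon>"
proof -
  define l' where "l' = max l1 (- A - \<eta>)"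
  have mono: "\<And>l l' a p. l \<le> l' \<Longrightarrow> F a p l' \<le> F a p l"
    using \<open>hypF1 F\<close> unfolding hypF1_def by blast
  have "l1 \<le> l'" "l' - \<eta> \<le> l2" "\<bar>l'\<bar> \<le> r" "\<bar>l' - \<eta>\<bar> \<le> r"
    using assms(6-11) unfolding l'_def by auto
  then have "F a p l' \<le> f1" "f2 \<le> F b q (l' - \<eta>)" "\<bar>F b p l' - F b q (l' - \<eta>)\<bar> \<le> \<epsilon>"
    using mono[of l1 l' a p] mono[of "l' - \<eta>" l2 b q] sub super cont[of l' "l' - \<eta>"] \<open>0 \<le> \<eta>\<close>
    by auto
  then show ?thesis
    using strict[of l'] by linarith
qed

lemma hypF3_small_variation:
  fixes F :: "real \<Rightarrow> 'n::euclidean_space \<Rightarrow> real \<Rightarrow> real"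
  assumes "hypF3 F" "0 < M" "0 < r" "0 < e"
  obtains s0 where "0 < s0" and "\<And>a p q l l'. \<bar>a\<bar> \<le> M \<Longrightarrow> norm p \<le> r \<Longrightarrow> norm q \<le> r \<Longrightarrow>
      \<bar>l\<bar> \<le> r \<Longrightarrow> \<bar>l'\<bar> \<le> r \<Longrightarrow> norm (p - q) + \<bar>l - l'\<bar> < s0 \<Longrightarrow> \<bar>F a p l - F a q l'\<bar> < e"
proof -
  obtain \<omega> where "modulus \<omega>" and \<omega>: "\<forall>a p q l l'. \<bar>a\<bar> \<le> M \<and> norm p \<le> r \<and> norm q \<le> r
      \<and> \<bar>l\<bar> \<le> r \<and> \<bar>l'\<bar> \<le> r \<longrightarrow> \<bar>F a p l - F a q l'\<bar> \<le> \<omega> (norm (p - q) + \<bar>l - l'\<bar>)"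
    using assms(1-3) unfolding hypF3_def by (elim allE[of _ M] allE[of _ r]) auto
  obtain s0 where "0 < s0" and s0: "\<And>s. 0 < s \<Longrightarrow> s < s0 \<Longrightarrow> \<omega> s < e"
    using modulus_eventually_small[OF \<open>modulus \<omega>\<close> \<open>0 < e\<close>] by blast
  show ?thesis
  proof (rule that[OF \<open>0 < s0\<close>])
    fix a l l' :: real and p q :: 'n
    assume bounds: "\<bar>a\<bar> \<le> M" "norm p \<le> r" "norm q \<le> r" "\<bar>l\<bar> \<le> r" "\<bar>l'\<bar> \<le> r"
      and "norm (p - q) + \<bar>l - l'\<bar> < s0"
    show "\<bar>F a p l - F a q l'\<bar> < e"
    proof (cases "p = q \<and> l = l'")
      case False
      then have "0 < norm (p - q) + \<bar>l - l'\<bar>"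
        by (auto simp: add_pos_nonneg add_nonneg_pos)
      with \<omega> bounds s0 \<open>norm (p - q) + \<bar>l - l'\<bar> < s0\<close> show ?thesis
        by (meson order.strict_trans1)
    qed (use \<open>0 < e\<close> in simp)
  qed
qed

section \<open>The nonlocal operators\<close>

lemma measurable_slice_right:
  fixes j :: "'a::topological_space \<Rightarrow> 'b::topological_space \<Rightarrow> 'c::topological_space"
  assumes "(\<lambda>(p, z). j p z) \<in> borel_measurable borel"
  shows "j p \<in> borel_measurable borel"
proof -
  have "(\<lambda>z. (p, z)) \<in> borel \<rightarrow>\<^sub>M (borel :: ('a \<times> 'b) measure)"
    by (intro borel_measurable_continuous_onI continuous_intros)
  from measurable_compose[OF this assms] show ?thesis
    by simp
qed

lemma nn_set_integral_le_imp_set_integrable: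
  fixes g :: "'a \<Rightarrow> real"
  assumes "g \<in> borel_measurable M" "\<And>z. 0 \<le> g z" "S \<in> sets M"
    and bound: "(\<integral>\<^sup>+ z \<in> S. ennreal (g z) \<partial>M) \<le> ennreal C"
  shows "set_integrable M S g"
    and "(LINT z:S|M. g z) \<le> max C 0"
proof -
  have eq: "(\<integral>\<^sup>+ z \<in> S. ennreal (g z) \<partial>M) = (\<integral>\<^sup>+ z. ennreal (indicator S z *\<^sub>R g z) \<partial>M)"
    by (rule nn_integral_cong) (simp split: split_indicator)
  have "(\<integral>\<^sup>+ z. ennreal (indicator S z *\<^sub>R g z) \<partial>M) < \<infinity>"
    using le_less_trans[OF bound ennreal_less_top] eq by simp
  then show int: "set_integrable M S g"
    unfolding set_integrable_def
    by (intro integrableI_nonneg) (use assms in \<open>auto split: split_indicator\<close>)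
  have "ennreal (LINT z:S|M. g z) = (\<integral>\<^sup>+ z. ennreal (indicator S z *\<^sub>R g z) \<partial>M)"
    unfolding set_lebesgue_integral_def
    by (rule nn_integral_eq_integral[symmetric])
      (use int assms in \<open>auto simp: set_integrable_def split: split_indicator\<close>)
  also have "\<dots> \<le> ennreal C"
    using bound eq by simp
  also have "\<dots> \<le> ennreal (max C 0)"
    by (rule ennreal_leI) simp
  finally show "(LINT z:S|M. g z) \<le> max C 0"
    by (simp add: ennreal_le_iff)
qed

lemma set_integral_mono_set:
  fixes f :: "'a \<Rightarrow> real"
  assumes "set_integrable M A f" "B \<in> sets M" "B \<subseteq> A" "\<And>x. x \<in> A \<Longrightarrow> 0 \<le> f x"
  shows "(LINT x:B|M. f x) \<le> (LINT x:A|M. f x)"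
  unfolding set_lebesgue_integral_def
proof (rule integral_mono)
  show "integrable M (\<lambda>x. indicator B x *\<^sub>R f x)"
    using set_integrable_subset[OF assms(1-3)] unfolding set_integrable_def .
  show "integrable M (\<lambda>x. indicator A x *\<^sub>R f x)"
    using assms(1) unfolding set_integrable_def .
  show "indicator B x *\<^sub>R f x \<le> indicator A x *\<^sub>R f x" for x
    using assms(3) assms(4)[of x] by (auto simp: indicator_def)
qed

lemma L_small_quad_test:
  "L_small \<mu> j \<delta> (quad_test c d a) (quad_grad c d a x) x
     = (c + d) * (LINT z:{z. 0 < norm z \<and> norm z < \<delta>}|\<mu>. (norm (j (quad_grad c d a x) z))\<^sup>2)"
  unfolding L_small_def by (simp only: quad_test_increment set_integral_mult_right)

locale jump_operators =
  fixes \<mu>1 \<mu>2 :: "'z::euclidean_space measure" and j1 j2 :: "'n::euclidean_space \<Rightarrow> 'z \<Rightarrow> 'n"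
  assumes sets_\<mu>1: "sets \<mu>1 = sets borel" and sets_\<mu>2: "sets \<mu>2 = sets borel"
    and j1_measurable: "(\<lambda>(p, z). j1 p z) \<in> borel_measurable borel"
    and j2_measurable: "(\<lambda>(p, z). j2 p z) \<in> borel_measurable borel"
    and M: "hypM \<mu>1 \<mu>2" and J1: "hypJ1 \<mu>1 \<mu>2 j1 j2" and J2: "hypJ2 \<mu>1 j1"
begin

abbreviation L_split :: "real \<Rightarrow> ('n \<Rightarrow> real) \<Rightarrow> ('n \<Rightarrow> real) \<Rightarrow> 'n \<Rightarrow> 'n \<Rightarrow> real" where
  "L_split \<delta> \<phi> w p x \<equiv> L_small \<mu>1 j1 \<delta> \<phi> p x + L_big \<mu>1 j1 \<delta> w p x + L_two \<mu>2 j2 w p x"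

lemma borel_measurable_\<mu>1: "f \<in> borel_measurable borel \<Longrightarrow> f \<in> borel_measurable \<mu>1"
  using measurable_cong_sets[OF sets_\<mu>1 refl] by auto

lemma borel_measurable_\<mu>2: "f \<in> borel_measurable borel \<Longrightarrow> f \<in> borel_measurable \<mu>2"
  using measurable_cong_sets[OF sets_\<mu>2 refl] by auto

lemma sets_\<mu>1_borel: "S \<in> sets borel \<Longrightarrow> S \<in> sets \<mu>1"
  using sets_\<mu>1 by auto

lemma sets_\<mu>2_borel: "S \<in> sets borel \<Longrightarrow> S \<in> sets \<mu>2"
  using sets_\<mu>2 by auto

lemma j1_borel_measurable [measurable]: "j1 p \<in> borel_measurable borel"
  by (rule measurable_slice_right[OF j1_measurable])

lemma j2_borel_measurable [measurable]: "j2 p \<in> borel_measurable borel"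
  by (rule measurable_slice_right[OF j2_measurable])

lemma norm_sets_borel [measurable]:
  "{z::'z. 0 < norm z} \<in> sets borel" "{z::'z. d \<le> norm z} \<in> sets borel"
  "{z::'z. 0 < norm z \<and> norm z < d} \<in> sets borel"
proof -
  show "{z::'z. 0 < norm z} \<in> sets borel" by measurable
  show "{z::'z. d \<le> norm z} \<in> sets borel" by measurable
  show "{z::'z. 0 < norm z \<and> norm z < d} \<in> sets borel" by measurable
qed

lemma emeasure_\<mu>2_finite: "emeasure \<mu>2 {z. 0 < norm z} < \<infinity>"
  using M unfolding hypM_def by (auto simp: top_unique less_top)

text \<open>Chebyshev: \<open>\<delta>\<^sup>2 \<mu>1 {\<delta> \<le> |z|} \<le> \<integral> |z|\<^sup>2 d\<mu>1\<close>.\<close>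
lemma emeasure_\<mu>1_far_finite:
  assumes "0 < \<delta>"
  shows "emeasure \<mu>1 {z. \<delta> \<le> norm z} < \<infinity>"
proof -
  have "ennreal (\<delta>\<^sup>2) * emeasure \<mu>1 {z. \<delta> \<le> norm z}
      = (\<integral>\<^sup>+ z. ennreal (\<delta>\<^sup>2) * indicator {z. \<delta> \<le> norm z} z \<partial>\<mu>1)"
    by (rule nn_integral_cmult_indicator[symmetric]) (intro sets_\<mu>1_borel, measurable)
  also have "\<dots> \<le> (\<integral>\<^sup>+ z \<in> {z. 0 < norm z}. ennreal ((norm z)\<^sup>2) \<partial>\<mu>1)"
  proof (rule nn_integral_mono)
    fix z :: 'z
    show "ennreal (\<delta>\<^sup>2) * indicator {z. \<delta> \<le> norm z} z
        \<le> ennreal ((norm z)\<^sup>2) * indicator {z. 0 < norm z} z"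
      using assms power_mono[of \<delta> "norm z" 2] by (auto simp: indicator_def)
  qed
  also have "\<dots> < \<infinity>"
    using M unfolding hypM_def by (auto simp: top_unique less_top)
  finally show ?thesis
    using assms by (auto simp: ennreal_mult_less_top)
qed

lemma set_integrable_\<mu>1_bounded:
  fixes f :: "'z \<Rightarrow> real"
  assumes "S \<in> sets borel" "emeasure \<mu>1 S < \<infinity>" "f \<in> borel_measurable borel" "\<And>z. \<bar>f z\<bar> \<le> B"
  shows "set_integrable \<mu>1 S f"
  unfolding set_integrable_def
  by (rule integrableI_bounded_set_indicator[where B=B])
    (use assms in \<open>auto intro: borel_measurable_\<mu>1 sets_\<mu>1_borel\<close>)

lemma set_integrable_\<mu>2_bounded:
  fixes f :: "'z \<Rightarrow> real"
  assumes "f \<in> borel_measurable borel" "\<And>z. \<bar>f z\<bar> \<le> B"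
  shows "set_integrable \<mu>2 {z. 0 < norm z} f"
  unfolding set_integrable_def
  by (rule integrableI_bounded_set_indicator[where B=B])
    (use assms emeasure_\<mu>2_finite in \<open>auto intro: borel_measurable_\<mu>2 sets_\<mu>2_borel\<close>)

lemma sq_jump_nn_integral_bounded:
  "0 < r \<Longrightarrow> \<exists>C. \<forall>p. norm p < r \<longrightarrow>
     (\<integral>\<^sup>+ z \<in> {z. 0 < norm z}. ennreal ((norm (j1 p z))\<^sup>2) \<partial>\<mu>1) \<le> ennreal C"
  using J1 unfolding hypJ1_def by blast

lemma sq_jump_integrable: "set_integrable \<mu>1 {z. 0 < norm z} (\<lambda>z. (norm (j1 p z))\<^sup>2)"
proof -
  have "0 < norm p + 1"
    by (simp add: add_nonneg_pos)
  then obtain C where "\<forall>q. norm q < norm p + 1 \<longrightarrow>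
      (\<integral>\<^sup>+ z \<in> {z. 0 < norm z}. ennreal ((norm (j1 q z))\<^sup>2) \<partial>\<mu>1) \<le> ennreal C"
    using sq_jump_nn_integral_bounded by blast
  then have "(\<integral>\<^sup>+ z \<in> {z. 0 < norm z}. ennreal ((norm (j1 p z))\<^sup>2) \<partial>\<mu>1) \<le> ennreal C"
    by simp
  then show ?thesis
    by (rule nn_set_integral_le_imp_set_integrable(1)[rotated 3])
      (auto intro!: borel_measurable_\<mu>1 sets_\<mu>1_borel)
qed

lemma sq_jump_integral_bounded:
  assumes "0 < r"
  shows "\<exists>C. \<forall>p. norm p < r \<longrightarrow> (LINT z:{z. 0 < norm z}|\<mu>1. (norm (j1 p z))\<^sup>2) \<le> C"
proof -
  obtain C where C: "\<forall>p. norm p < r \<longrightarrow>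
      (\<integral>\<^sup>+ z \<in> {z. 0 < norm z}. ennreal ((norm (j1 p z))\<^sup>2) \<partial>\<mu>1) \<le> ennreal C"
    using sq_jump_nn_integral_bounded[OF assms] by blast
  have "(LINT z:{z. 0 < norm z}|\<mu>1. (norm (j1 p z))\<^sup>2) \<le> max C 0" if "norm p < r" for p
    by (rule nn_set_integral_le_imp_set_integrable(2)[rotated 3])
      (use C that in \<open>auto intro!: borel_measurable_\<mu>1 sets_\<mu>1_borel\<close>)
  then show ?thesis
    by blast
qed

lemma sq_jump_integrable_on:
  "S \<in> sets borel \<Longrightarrow> S \<subseteq> {z. 0 < norm z} \<Longrightarrow> set_integrable \<mu>1 S (\<lambda>z. (norm (j1 p z))\<^sup>2)"
  by (rule set_integrable_subset[OF sq_jump_integrable]) (auto intro: sets_\<mu>1_borel)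

lemma sq_jump_diff_integrable: "set_integrable \<mu>1 {z. 0 < norm z} (\<lambda>z. (norm (j1 p z - j1 q z))\<^sup>2)"
proof (rule set_integrable_bound[where f="\<lambda>z. 2 * (norm (j1 p z))\<^sup>2 + 2 * (norm (j1 q z))\<^sup>2"])
  show "set_integrable \<mu>1 {z. 0 < norm z} (\<lambda>z. 2 * (norm (j1 p z))\<^sup>2 + 2 * (norm (j1 q z))\<^sup>2)"
    using sq_jump_integrable[of p] sq_jump_integrable[of q] by (intro set_integral_add) auto
  show "set_borel_measurable \<mu>1 {z. 0 < norm z} (\<lambda>z. (norm (j1 p z - j1 q z))\<^sup>2)"
    unfolding set_borel_measurable_def by (intro borel_measurable_\<mu>1) measurable
  have "(norm (a - b))\<^sup>2 \<le> 2 * (norm a)\<^sup>2 + 2 * (norm b)\<^sup>2" for a b :: 'n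
  proof -
    have "(norm (a - b))\<^sup>2 \<le> (norm a + norm b)\<^sup>2"
      using norm_triangle_ineq4[of a b] by (simp add: power_mono)
    also have "\<dots> \<le> 2 * (norm a)\<^sup>2 + 2 * (norm b)\<^sup>2"
      using zero_le_power2[of "norm a - norm b"] unfolding power2_sum power2_diff by linarith
    finally show ?thesis .
  qed
  then show "AE z in \<mu>1. z \<in> {z. 0 < norm z} \<longrightarrow> norm ((norm (j1 p z - j1 q z))\<^sup>2)
      \<le> norm (2 * (norm (j1 p z))\<^sup>2 + 2 * (norm (j1 q z))\<^sup>2)"
    by (intro AE_I2) simp
qed

lemma sq_jump_integral_nonneg: "0 \<le> (LINT z:S|\<mu>1. (norm (j1 p z))\<^sup>2)"
  unfolding set_lebesgue_integral_def by (rule integral_nonneg_AE) (auto simp: indicator_def)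

lemma L_two_integrable:
  fixes w :: "'n \<Rightarrow> real"
  assumes "w \<in> borel_measurable borel" and "\<And>y. \<bar>w y\<bar> \<le> K"
  shows "set_integrable \<mu>2 {z. 0 < norm z} (\<lambda>z. w (x + j2 p z) - w x)"
proof (rule set_integrable_\<mu>2_bounded[where B="2 * K"])
  show "(\<lambda>z. w (x + j2 p z) - w x) \<in> borel_measurable borel"
    using assms(1) by measurable
  show "\<bar>w (x + j2 p z) - w x\<bar> \<le> 2 * K" for z
    using assms(2)[of x] assms(2)[of "x + j2 p z"] by linarith
qed

lemma L_big_integrable:
  fixes w :: "'n \<Rightarrow> real"
  assumes "0 < \<delta>" "w \<in> borel_measurable borel" and "\<And>y. \<bar>w y\<bar> \<le> K"
  shows "set_integrable \<mu>1 {z. \<delta> \<le> norm z} (\<lambda>z. w (x + j1 p z) - w x - j1 p z \<bullet> p)"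
proof -
  have jumps: "set_integrable \<mu>1 {z. \<delta> \<le> norm z} (\<lambda>z. w (x + j1 p z) - w x)"
  proof (rule set_integrable_\<mu>1_bounded[where B="2 * K"])
    show "(\<lambda>z. w (x + j1 p z) - w x) \<in> borel_measurable borel"
      using assms(2) by measurable
    show "\<bar>w (x + j1 p z) - w x\<bar> \<le> 2 * K" for z
      using assms(3)[of x] assms(3)[of "x + j1 p z"] by linarith
  qed (use emeasure_\<mu>1_far_finite[OF \<open>0 < \<delta>\<close>] in auto)
  have majorant: "set_integrable \<mu>1 {z. \<delta> \<le> norm z} (\<lambda>z. norm p * (1 + (norm (j1 p z))\<^sup>2))"
  proof -
    have "set_integrable \<mu>1 {z. \<delta> \<le> norm z} (\<lambda>z. 1::real)"
      by (rule set_integrable_\<mu>1_bounded[where B=1]) (use emeasure_\<mu>1_far_finite[OF \<open>0 < \<delta>\<close>] in auto)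
    moreover have "set_integrable \<mu>1 {z. \<delta> \<le> norm z} (\<lambda>z. (norm (j1 p z))\<^sup>2)"
      by (rule sq_jump_integrable_on) (use \<open>0 < \<delta>\<close> norm_sets_borel in auto)
    ultimately show ?thesis
      by (intro set_integrable_mult_right set_integral_add)
  qed
  have bound: "\<bar>j1 p z \<bullet> p\<bar> \<le> norm p * (1 + (norm (j1 p z))\<^sup>2)" for z
  proof -
    have "0 \<le> (norm (j1 p z) - 1)\<^sup>2"
      by simp
    then have "2 * norm (j1 p z) \<le> (norm (j1 p z))\<^sup>2 + 1"
      unfolding power2_diff by simp
    then have "norm (j1 p z) \<le> 1 + (norm (j1 p z))\<^sup>2"
      using zero_le_power2[of "norm (j1 p z)"] by linarith
    then show ?thesis
      using Cauchy_Schwarz_ineq2[of "j1 p z" p] by (simp add: mult.commute mult_left_mono order_trans)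
  qed
  have meas: "set_borel_measurable \<mu>1 {z. \<delta> \<le> norm z} (\<lambda>z. j1 p z \<bullet> p)"
    unfolding set_borel_measurable_def by (rule borel_measurable_\<mu>1) measurable
  have "set_integrable \<mu>1 {z. \<delta> \<le> norm z} (\<lambda>z. j1 p z \<bullet> p)"
    by (rule set_integrable_bound[OF majorant meas]) (use bound in \<open>simp add: mult_nonneg_nonneg\<close>)
  with jumps show ?thesis
    using set_integral_diff(1) by fastforce
qed

lemma L_two_abs_le:
  fixes w :: "'n \<Rightarrow> real"
  assumes "w \<in> borel_measurable borel" and "\<And>y. \<bar>w y\<bar> \<le> K"
  shows "\<bar>L_two \<mu>2 j2 w p x\<bar> \<le> 2 * K * measure \<mu>2 {z. 0 < norm z}"
proof -
  have "\<bar>L_two \<mu>2 j2 w p x\<bar> \<le> (LINT z:{z. 0 < norm z}|\<mu>2. \<bar>w (x + j2 p z) - w x\<bar>)"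
    unfolding L_two_def set_lebesgue_integral_def
    using integral_abs_bound[of \<mu>2 "\<lambda>z. indicator {z. 0 < norm z} z *\<^sub>R (w (x + j2 p z) - w x)"]
    by (simp add: abs_mult)
  also have "\<dots> \<le> (LINT z:{z. 0 < norm z}|\<mu>2. 2 * K)"
  proof (rule set_integral_mono)
    show "set_integrable \<mu>2 {z. 0 < norm z} (\<lambda>z. \<bar>w (x + j2 p z) - w x\<bar>)"
      by (rule set_integrable_abs[OF L_two_integrable[OF assms]])
    show "set_integrable \<mu>2 {z. 0 < norm z} (\<lambda>z. 2 * K)"
      by (rule set_integrable_\<mu>2_bounded[where B="\<bar>2 * K\<bar>"]) auto
    show "\<bar>w (x + j2 p z) - w x\<bar> \<le> 2 * K" for z
      using assms(2)[of x] assms(2)[of "x + j2 p z"] by linarith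
  qed
  also have "\<dots> = 2 * K * measure \<mu>2 {z. 0 < norm z}"
    by (subst set_integral_const) (use emeasure_\<mu>2_finite in \<open>auto intro!: sets_\<mu>2_borel\<close>)
  finally show ?thesis .
qed

lemma sq_jump_integral_split:
  assumes "0 < \<delta>"
  shows "t * (LINT z:{z. 0 < norm z \<and> norm z < \<delta>}|\<mu>1. (norm (j1 p z))\<^sup>2)
      + t * (LINT z:{z. \<delta> \<le> norm z}|\<mu>1. (norm (j1 p z))\<^sup>2)
    = t * (LINT z:{z. 0 < norm z}|\<mu>1. (norm (j1 p z))\<^sup>2)"
proof -
  have split: "{z::'z. 0 < norm z} = {z. 0 < norm z \<and> norm z < \<delta>} \<union> {z. \<delta> \<le> norm z}"
    using assms by auto
  have "set_integrable \<mu>1 {z. 0 < norm z \<and> norm z < \<delta>} (\<lambda>z. (norm (j1 p z))\<^sup>2)"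
    by (rule sq_jump_integrable_on) (auto simp: norm_sets_borel)
  moreover have "set_integrable \<mu>1 {z. \<delta> \<le> norm z} (\<lambda>z. (norm (j1 p z))\<^sup>2)"
    by (rule sq_jump_integrable_on) (use assms in \<open>auto simp: norm_sets_borel\<close>)
  ultimately have "(LINT z:{z. 0 < norm z}|\<mu>1. (norm (j1 p z))\<^sup>2)
      = (LINT z:{z. 0 < norm z \<and> norm z < \<delta>}|\<mu>1. (norm (j1 p z))\<^sup>2)
        + (LINT z:{z. \<delta> \<le> norm z}|\<mu>1. (norm (j1 p z))\<^sup>2)"
    unfolding split by (rule set_integral_Un[rotated]) auto
  then show ?thesis
    by (simp add: distrib_left)
qed

lemma L_big_quad_test_le_at_max:
  fixes w :: "'n \<Rightarrow> real"
  assumes "0 < \<delta>" "w \<in> borel_measurable borel" "\<And>y. \<bar>w y\<bar> \<le> K"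
    and max: "\<And>y. w y - quad_test c d a y \<le> w x - quad_test c d a x"
    and p: "p = quad_grad c d a x"
  shows "L_big \<mu>1 j1 \<delta> w p x \<le> (c + d) * (LINT z:{z. \<delta> \<le> norm z}|\<mu>1. (norm (j1 p z))\<^sup>2)"
proof -
  have "L_big \<mu>1 j1 \<delta> w p x \<le> (LINT z:{z. \<delta> \<le> norm z}|\<mu>1. (c + d) * (norm (j1 p z))\<^sup>2)"
    unfolding L_big_def
  proof (rule set_integral_mono)
    show "set_integrable \<mu>1 {z. \<delta> \<le> norm z} (\<lambda>z. w (x + j1 p z) - w x - j1 p z \<bullet> p)"
      by (rule L_big_integrable[OF assms(1-3)])
    show "set_integrable \<mu>1 {z. \<delta> \<le> norm z} (\<lambda>z. (c + d) * (norm (j1 p z))\<^sup>2)"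
      by (intro set_integrable_mult_right sq_jump_integrable_on) (use assms(1) norm_sets_borel in auto)
    show "w (x + j1 p z) - w x - j1 p z \<bullet> p \<le> (c + d) * (norm (j1 p z))\<^sup>2" for z
      using max[of "x + j1 p z"] quad_test_increment[of c d a x "j1 p z"] unfolding p by linarith
  qed
  then show ?thesis
    by (simp only: set_integral_mult_right)
qed

lemma L_big_quad_test_ge_at_min:
  fixes w :: "'n \<Rightarrow> real"
  assumes "0 < \<delta>" "w \<in> borel_measurable borel" "\<And>y. \<bar>w y\<bar> \<le> K"
    and min: "\<And>y. w x - quad_test c d a x \<le> w y - quad_test c d a y"
    and p: "p = quad_grad c d a x"
  shows "(c + d) * (LINT z:{z. \<delta> \<le> norm z}|\<mu>1. (norm (j1 p z))\<^sup>2) \<le> L_big \<mu>1 j1 \<delta> w p x"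
proof -
  have "(LINT z:{z. \<delta> \<le> norm z}|\<mu>1. (c + d) * (norm (j1 p z))\<^sup>2) \<le> L_big \<mu>1 j1 \<delta> w p x"
    unfolding L_big_def
  proof (rule set_integral_mono)
    show "set_integrable \<mu>1 {z. \<delta> \<le> norm z} (\<lambda>z. w (x + j1 p z) - w x - j1 p z \<bullet> p)"
      by (rule L_big_integrable[OF assms(1-3)])
    show "set_integrable \<mu>1 {z. \<delta> \<le> norm z} (\<lambda>z. (c + d) * (norm (j1 p z))\<^sup>2)"
      by (intro set_integrable_mult_right sq_jump_integrable_on) (use assms(1) norm_sets_borel in auto)
    show "(c + d) * (norm (j1 p z))\<^sup>2 \<le> w (x + j1 p z) - w x - j1 p z \<bullet> p" for z
      using min[of "x + j1 p z"] quad_test_increment[of c d a x "j1 p z"] unfolding p by linarith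
  qed
  then show ?thesis
    by (simp only: set_integral_mult_right)
qed

lemma L_split_quad_test_le_at_max:
  fixes w :: "'n \<Rightarrow> real"
  assumes "0 < \<delta>" "w \<in> borel_measurable borel" "\<And>y. \<bar>w y\<bar> \<le> K"
    and "\<And>y. w y - quad_test c d a y \<le> w x - quad_test c d a x"
    and p: "p = quad_grad c d a x"
  shows "L_split \<delta> (quad_test c d a) w p x
    \<le> (c + d) * (LINT z:{z. 0 < norm z}|\<mu>1. (norm (j1 p z))\<^sup>2) + 2 * K * measure \<mu>2 {z. 0 < norm z}"
  using L_small_quad_test[of \<mu>1 j1 \<delta> c d a x, folded p] L_big_quad_test_le_at_max[OF assms]
    L_two_abs_le[OF assms(2,3), of p x] sq_jump_integral_split[OF assms(1), of "c + d" p]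
  by (simp add: abs_le_iff)

lemma L_split_quad_test_ge_at_min:
  fixes w :: "'n \<Rightarrow> real"
  assumes "0 < \<delta>" "w \<in> borel_measurable borel" "\<And>y. \<bar>w y\<bar> \<le> K"
    and "\<And>y. w x - quad_test c d a x \<le> w y - quad_test c d a y"
    and p: "p = quad_grad c d a x"
  shows "(c + d) * (LINT z:{z. 0 < norm z}|\<mu>1. (norm (j1 p z))\<^sup>2) - 2 * K * measure \<mu>2 {z. 0 < norm z}
    \<le> L_split \<delta> (quad_test c d a) w p x"
  using L_small_quad_test[of \<mu>1 j1 \<delta> c d a x, folded p] L_big_quad_test_ge_at_min[OF assms]
    L_two_abs_le[OF assms(2,3), of p x] sq_jump_integral_split[OF assms(1), of "c + d" p]
  by (simp add: abs_le_iff)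

lemma L_big_diff_le_at_doubled_max:
  fixes u v :: "'n \<Rightarrow> real"
  assumes "0 < \<delta>" "0 \<le> \<kappa>" "0 \<le> \<beta>"
    and "u \<in> borel_measurable borel" "\<And>x. \<bar>u x\<bar> \<le> K"
    and "v \<in> borel_measurable borel" "\<And>x. \<bar>v x\<bar> \<le> K"
    and max: "\<And>x y. u x - v y - doubling_penalty \<kappa> \<beta> x y \<le> u X - v Y - doubling_penalty \<kappa> \<beta> X Y"
    and p: "p = quad_grad \<kappa> \<beta> Y X" and q: "q = quad_grad (-\<kappa>) (-\<beta>) X Y"
  shows "L_big \<mu>1 j1 \<delta> u p X - L_big \<mu>1 j1 \<delta> v q Y
    \<le> (LINT z:{z. 0 < norm z}|\<mu>1. \<kappa> * (norm (j1 p z - j1 q z))\<^sup>2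
                                   + \<beta> * ((norm (j1 p z))\<^sup>2 + (norm (j1 q z))\<^sup>2))"
    (is "_ \<le> (LINT z:_|\<mu>1. ?E z)")
proof -
  have int_u: "set_integrable \<mu>1 {z. \<delta> \<le> norm z} (\<lambda>z. u (X + j1 p z) - u X - j1 p z \<bullet> p)"
    and int_v: "set_integrable \<mu>1 {z. \<delta> \<le> norm z} (\<lambda>z. v (Y + j1 q z) - v Y - j1 q z \<bullet> q)"
    using L_big_integrable assms(1,4-7) by blast+
  have int_E: "set_integrable \<mu>1 {z. 0 < norm z} ?E"
    using sq_jump_diff_integrable[of p q] sq_jump_integrable[of p] sq_jump_integrable[of q]
    by (intro set_integral_add set_integrable_mult_right)
  have far: "{z::'z. \<delta> \<le> norm z} \<subseteq> {z. 0 < norm z}"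
    using assms(1) by auto
  have "L_big \<mu>1 j1 \<delta> u p X - L_big \<mu>1 j1 \<delta> v q Y
      = (LINT z:{z. \<delta> \<le> norm z}|\<mu>1. (u (X + j1 p z) - u X - j1 p z \<bullet> p)
                                     - (v (Y + j1 q z) - v Y - j1 q z \<bullet> q))"
    unfolding L_big_def by (rule set_integral_diff(2)[OF int_u int_v, symmetric])
  also have "\<dots> \<le> (LINT z:{z. \<delta> \<le> norm z}|\<mu>1. ?E z)"
  proof (rule set_integral_mono)
    show "set_integrable \<mu>1 {z. \<delta> \<le> norm z}
        (\<lambda>z. (u (X + j1 p z) - u X - j1 p z \<bullet> p) - (v (Y + j1 q z) - v Y - j1 q z \<bullet> q))"
      by (rule set_integral_diff(1)[OF int_u int_v])
    show "set_integrable \<mu>1 {z. \<delta> \<le> norm z} ?E"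
      by (rule set_integrable_subset[OF int_E _ far]) (auto intro: sets_\<mu>1_borel)
    show "(u (X + j1 p z) - u X - j1 p z \<bullet> p) - (v (Y + j1 q z) - v Y - j1 q z \<bullet> q) \<le> ?E z" for z
      using max[of "X + j1 p z" "Y + j1 q z"] doubling_penalty_increment[of \<kappa> \<beta> X "j1 p z" Y "j1 q z"]
      unfolding p q by linarith
  qed
  also have "\<dots> \<le> (LINT z:{z. 0 < norm z}|\<mu>1. ?E z)"
    by (rule set_integral_mono_set[OF int_E _ far]) (use assms(2,3) in \<open>auto intro: sets_\<mu>1_borel\<close>)
  finally show ?thesis .
qed

text \<open>The cap \<open>4 K\<close>, from the bounds on \<open>u\<close> and \<open>v\<close>, is the integrable majorant needed
  for dominated convergence as the doubled maxima vary.\<close>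
lemma L_two_diff_le_at_doubled_max:
  fixes u v :: "'n \<Rightarrow> real"
  assumes "u \<in> borel_measurable borel" "\<And>x. \<bar>u x\<bar> \<le> K"
    and "v \<in> borel_measurable borel" "\<And>x. \<bar>v x\<bar> \<le> K"
    and max: "\<And>x y. u x - v y - doubling_penalty \<kappa> \<beta> x y \<le> u X - v Y - doubling_penalty \<kappa> \<beta> X Y"
  shows "L_two \<mu>2 j2 u p X - L_two \<mu>2 j2 v q Y
    \<le> (LINT z:{z. 0 < norm z}|\<mu>2. min (4 * K) (max (doubling_penalty \<kappa> \<beta> (X + j2 p z) (Y + j2 q z)
                                                     - doubling_penalty \<kappa> \<beta> X Y) 0))"
    (is "_ \<le> (LINT z:_|\<mu>2. ?T z)")
proof -
  have int_u: "set_integrable \<mu>2 {z. 0 < norm z} (\<lambda>z. u (X + j2 p z) - u X)"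
    and int_v: "set_integrable \<mu>2 {z. 0 < norm z} (\<lambda>z. v (Y + j2 q z) - v Y)"
    using L_two_integrable assms(1-4) by blast+
  have "L_two \<mu>2 j2 u p X - L_two \<mu>2 j2 v q Y
      = (LINT z:{z. 0 < norm z}|\<mu>2. (u (X + j2 p z) - u X) - (v (Y + j2 q z) - v Y))"
    unfolding L_two_def by (rule set_integral_diff(2)[OF int_u int_v, symmetric])
  also have "\<dots> \<le> (LINT z:{z. 0 < norm z}|\<mu>2. ?T z)"
  proof (rule set_integral_mono)
    show "set_integrable \<mu>2 {z. 0 < norm z} (\<lambda>z. (u (X + j2 p z) - u X) - (v (Y + j2 q z) - v Y))"
      by (rule set_integral_diff(1)[OF int_u int_v])
    have "0 \<le> K"
      using assms(2)[of X] by linarith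
    then show "set_integrable \<mu>2 {z. 0 < norm z} ?T"
      by (intro set_integrable_\<mu>2_bounded[where B="4 * K"]) (auto simp: doubling_penalty_def)
    show "(u (X + j2 p z) - u X) - (v (Y + j2 q z) - v Y) \<le> ?T z" for z
      using max[of "X + j2 p z" "Y + j2 q z"] assms(2)[of X] assms(2)[of "X + j2 p z"]
        assms(4)[of Y] assms(4)[of "Y + j2 q z"]
      by (simp add: abs_le_iff)
  qed
  finally show ?thesis .
qed

lemma small_jump_integral_tendsto_zero:
  "(\<lambda>n. LINT z:{z. 0 < norm z \<and> norm z < inverse (real (Suc n))}|\<mu>1. (norm (j1 p z))\<^sup>2) \<longlonglongrightarrow> 0"
proof -
  define s where "s = (\<lambda>n z. indicator {z. 0 < norm z \<and> norm z < inverse (real (Suc n))} z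
    *\<^sub>R (norm (j1 p z))\<^sup>2)"
  have "(\<lambda>n. integral\<^sup>L \<mu>1 (s n)) \<longlonglongrightarrow> integral\<^sup>L \<mu>1 (\<lambda>z. 0)"
  proof (rule integral_dominated_convergence)
    show "integrable \<mu>1 (\<lambda>z. indicator {z. 0 < norm z} z *\<^sub>R (norm (j1 p z))\<^sup>2)"
      using sq_jump_integrable[of p] unfolding set_integrable_def .
    show "s n \<in> borel_measurable \<mu>1" for n
      unfolding s_def by (rule borel_measurable_\<mu>1) measurable
    show "AE z in \<mu>1. norm (s n z) \<le> indicator {z. 0 < norm z} z *\<^sub>R (norm (j1 p z))\<^sup>2" for n
      by (rule AE_I2) (auto simp: s_def indicator_def)
    have "(\<lambda>n. s n z) \<longlonglongrightarrow> 0" for z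
    proof (cases "z = 0")
      case False
      then have "\<forall>\<^sub>F n in sequentially. inverse (real (Suc n)) < norm z"
        by (intro order_tendstoD(2)[OF LIMSEQ_inverse_real_of_nat]) simp
      then have "\<forall>\<^sub>F n in sequentially. s n z = 0"
        by eventually_elim (auto simp: s_def)
      then show ?thesis
        by (rule tendsto_eventually)
    qed (simp add: s_def)
    then show "AE z in \<mu>1. (\<lambda>n. s n z) \<longlonglongrightarrow> 0"
      by simp
  qed simp
  then show ?thesis
    by (simp add: s_def set_lebesgue_integral_def)
qed

lemma small_jump_integral_eventually_small:
  assumes "0 < e"
  shows "\<forall>\<^sub>F \<delta> in at_right 0. (LINT z:{z. 0 < norm z \<and> norm z < \<delta>}|\<mu>1. (norm (j1 p z))\<^sup>2) < e"
proof -
  obtain N where N: "(LINT z:{z. 0 < norm z \<and> norm z < inverse (real (Suc N))}|\<mu>1. (norm (j1 p z))\<^sup>2) < e"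
    using order_tendstoD(2)[OF small_jump_integral_tendsto_zero assms]
    by (auto simp: eventually_sequentially)
  have "(LINT z:{z. 0 < norm z \<and> norm z < \<delta>}|\<mu>1. (norm (j1 p z))\<^sup>2) < e"
    if "\<delta> < inverse (real (Suc N))" for \<delta>
  proof -
    have "(LINT z:{z. 0 < norm z \<and> norm z < \<delta>}|\<mu>1. (norm (j1 p z))\<^sup>2)
        \<le> (LINT z:{z. 0 < norm z \<and> norm z < inverse (real (Suc N))}|\<mu>1. (norm (j1 p z))\<^sup>2)"
      by (rule set_integral_mono_set[OF sq_jump_integrable_on])
        (use that in \<open>auto simp: norm_sets_borel intro: sets_\<mu>1_borel\<close>)
    with N show ?thesis
      by simp
  qed
  then show ?thesis
    unfolding eventually_at_right_field by (intro exI[of _ "inverse (real (Suc N))"]) auto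
qed

lemma sq_jump_diff_integral_tendsto_zero:
  assumes "\<And>n. norm (p n) < R" "\<And>n. norm (q n) < R" and "(\<lambda>n. p n - q n) \<longlonglongrightarrow> 0"
  shows "(\<lambda>n. LINT z:{z. 0 < norm z}|\<mu>1. (norm (j1 (p n) z - j1 (q n) z))\<^sup>2) \<longlonglongrightarrow> 0"
    (is "?I \<longlonglongrightarrow> 0")
proof (rule order_tendstoI)
  show "\<forall>\<^sub>F n in sequentially. a < ?I n" if "a < 0" for a
    using that sq_jump_diff_integrable
    by (intro always_eventually allI less_le_trans[OF that] integral_nonneg_AE)
      (auto simp: set_lebesgue_integral_def indicator_def)
  show "\<forall>\<^sub>F n in sequentially. ?I n < e" if "0 < e" for e
  proof -
    have "0 < R"
      using assms(1)[of 0] norm_ge_zero[of "p 0"] by linarith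
    then obtain \<omega> where "modulus \<omega>" and \<omega>: "\<And>p q. norm p < R \<Longrightarrow> norm q < R \<Longrightarrow>
        (\<integral>\<^sup>+ z \<in> {z. 0 < norm z}. ennreal ((norm (j1 p z - j1 q z))\<^sup>2) \<partial>\<mu>1)
          \<le> ennreal (\<omega> (norm (p - q)))"
      using J2 unfolding hypJ2_def by blast
    obtain s0 where "0 < s0" and s0: "\<And>s. 0 < s \<Longrightarrow> s < s0 \<Longrightarrow> \<omega> s < e"
      using modulus_eventually_small[OF \<open>modulus \<omega>\<close> \<open>0 < e\<close>] by blast
    have "(\<lambda>n. norm (p n - q n)) \<longlonglongrightarrow> 0"
      using assms(3) by (simp only: tendsto_norm_zero_iff)
    then have "\<forall>\<^sub>F n in sequentially. norm (p n - q n) < s0"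
      using \<open>0 < s0\<close> by (rule order_tendstoD(2))
    then show ?thesis
    proof eventually_elim
      case (elim n)
      have "?I n \<le> max (\<omega> (norm (p n - q n))) 0"
        using \<omega>[OF assms(1,2)]
        by (intro nn_set_integral_le_imp_set_integrable(2)) (auto intro!: borel_measurable_\<mu>1 sets_\<mu>1_borel)
      moreover have "?I n = 0" if "p n = q n"
        using that by simp
      ultimately show ?case
        using s0[of "norm (p n - q n)"] elim \<open>0 < e\<close> by (cases "p n = q n") auto
    qed
  qed
qed

lemma L_two_error_tendsto_zero:
  fixes p q X Y :: "nat \<Rightarrow> 'n"
  assumes "0 \<le> K" "\<And>n. norm (p n) \<le> R" "\<And>n. norm (q n) \<le> R" "(\<lambda>n. p n - q n) \<longlonglongrightarrow> 0"
    and "Bseq (\<lambda>n. X n - Y n)" "(\<lambda>n. \<beta> n *\<^sub>R X n) \<longlonglongrightarrow> 0" "(\<lambda>n. \<beta> n *\<^sub>R Y n) \<longlonglongrightarrow> 0" "\<beta> \<longlonglongrightarrow> 0"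
  shows "(\<lambda>n. LINT z:{z. 0 < norm z}|\<mu>2. min (4 * K)
            (max (doubling_penalty \<kappa> (\<beta> n) (X n + j2 (p n) z) (Y n + j2 (q n) z)
                  - doubling_penalty \<kappa> (\<beta> n) (X n) (Y n)) 0)) \<longlonglongrightarrow> 0"
proof -
  define T where "T = (\<lambda>n z. min (4 * K)
    (max (doubling_penalty \<kappa> (\<beta> n) (X n + j2 (p n) z) (Y n + j2 (q n) z)
          - doubling_penalty \<kappa> (\<beta> n) (X n) (Y n)) 0))"
  have "(\<lambda>n. integral\<^sup>L \<mu>2 (\<lambda>z. indicator {z. 0 < norm z} z *\<^sub>R T n z)) \<longlonglongrightarrow> integral\<^sup>L \<mu>2 (\<lambda>z. 0)"
  proof (rule integral_dominated_convergence)
    show "integrable \<mu>2 (\<lambda>z. indicator {z. 0 < norm z} z *\<^sub>R (4 * K))"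
      using set_integrable_\<mu>2_bounded[of "\<lambda>z. 4 * K" "4 * K"] assms(1)
      unfolding set_integrable_def by simp
    show "(\<lambda>z. indicator {z. 0 < norm z} z *\<^sub>R T n z) \<in> borel_measurable \<mu>2" for n
      unfolding T_def doubling_penalty_def by (rule borel_measurable_\<mu>2) measurable
    show "AE z in \<mu>2. norm (indicator {z. 0 < norm z} z *\<^sub>R T n z)
        \<le> indicator {z. 0 < norm z} z *\<^sub>R (4 * K)" for n
      by (rule AE_I2) (use assms(1) in \<open>auto simp: T_def indicator_def\<close>)
    have "(\<lambda>n. indicator {z. 0 < norm z} z *\<^sub>R T n z) \<longlonglongrightarrow> 0"
      if "continuous_on UNIV (\<lambda>p. j2 p z)" for z
    proof -
      have "(\<lambda>n. doubling_penalty \<kappa> (\<beta> n) (X n + j2 (p n) z) (Y n + j2 (q n) z)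
                - doubling_penalty \<kappa> (\<beta> n) (X n) (Y n)) \<longlonglongrightarrow> 0"
        using continuous_on_Bseq[OF that assms(2)] continuous_on_Bseq[OF that assms(3)]
          continuous_on_diff_tendsto_zero[OF that assms(2-4)] assms(5-8)
        by (intro doubling_penalty_increment_tendsto)
      then have "(\<lambda>n. T n z) \<longlonglongrightarrow> min (4 * K) (max 0 0)"
        unfolding T_def by (intro tendsto_min tendsto_max tendsto_const)
      then show ?thesis
        using assms(1) by (simp add: tendsto_mult_right_zero)
    qed
    moreover have "AE z in \<mu>2. continuous_on UNIV (\<lambda>p. j2 p z)"
      using J1 unfolding hypJ1_def by blast
    ultimately show "AE z in \<mu>2. (\<lambda>n. indicator {z. 0 < norm z} z *\<^sub>R T n z) \<longlonglongrightarrow> 0"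
      by (auto elim: AE_mp)
  qed simp
  then show ?thesis
    by (simp add: T_def set_lebesgue_integral_def)
qed

lemma visc_sub_at_quad_test_max:
  assumes "visc_sub F f \<mu>1 \<mu>2 j1 j2 u" "0 < \<delta>"
    and "\<And>y. u y - quad_test c d a y \<le> u x - quad_test c d a x"
  shows "F (u x) (quad_grad c d a x) (L_split \<delta> (quad_test c d a) u (quad_grad c d a x) x) \<le> f x"
  using assms C2_grad_quad_test unfolding visc_sub_def by blast

lemma visc_super_at_quad_test_min:
  assumes "visc_super F f \<mu>1 \<mu>2 j1 j2 v" "0 < \<delta>"
    and "\<And>y. v x - quad_test c d a x \<le> v y - quad_test c d a y"
  shows "f x \<le> F (v x) (quad_grad c d a x) (L_split \<delta> (quad_test c d a) v (quad_grad c d a x) x)"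
  using assms C2_grad_quad_test unfolding visc_super_def by blast

end

section \<open>Nonlocal terms at the doubled maxima\<close>

locale doubled_maxima = jump_operators \<mu>1 \<mu>2 j1 j2
  for \<mu>1 \<mu>2 :: "'z::euclidean_space measure" and j1 j2 :: "'n::euclidean_space \<Rightarrow> 'z \<Rightarrow> 'n" +
  fixes u v :: "'n \<Rightarrow> real" and K \<kappa> :: real and \<beta> :: "nat \<Rightarrow> real" and X Y :: "nat \<Rightarrow> 'n"
  assumes u_measurable: "u \<in> borel_measurable borel" and v_measurable: "v \<in> borel_measurable borel"
    and u_bounded: "\<And>x. \<bar>u x\<bar> \<le> K" and v_bounded: "\<And>x. \<bar>v x\<bar> \<le> K"
    and \<kappa>_nonneg: "0 \<le> \<kappa>"
    and \<beta>_pos: "\<And>n. 0 < \<beta> n" and \<beta>_le_1: "\<And>n. \<beta> n \<le> 1" and \<beta>_tendsto: "\<beta> \<longlonglongrightarrow> 0"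
    and doubled_max: "\<And>n x y. u x - v y - doubling_penalty \<kappa> (\<beta> n) x y
                                 \<le> u (X n) - v (Y n) - doubling_penalty \<kappa> (\<beta> n) (X n) (Y n)"
    and \<beta>X_tendsto: "(\<lambda>n. \<beta> n *\<^sub>R X n) \<longlonglongrightarrow> 0" and \<beta>Y_tendsto: "(\<lambda>n. \<beta> n *\<^sub>R Y n) \<longlonglongrightarrow> 0"
    and X_minus_Y_Bseq: "Bseq (\<lambda>n. X n - Y n)"
begin

definition grad_sub :: "nat \<Rightarrow> 'n" where
  "grad_sub n = quad_grad \<kappa> (\<beta> n) (Y n) (X n)"

definition grad_super :: "nat \<Rightarrow> 'n" where
  "grad_super n = quad_grad (-\<kappa>) (-\<beta> n) (X n) (Y n)"

abbreviation L_sub :: "nat \<Rightarrow> real \<Rightarrow> real" where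
  "L_sub n \<delta> \<equiv> L_split \<delta> (quad_test \<kappa> (\<beta> n) (Y n)) u (grad_sub n) (X n)"

abbreviation L_super :: "nat \<Rightarrow> real \<Rightarrow> real" where
  "L_super n \<delta> \<equiv> L_split \<delta> (quad_test (-\<kappa>) (-\<beta> n) (X n)) v (grad_super n) (Y n)"

lemma K_nonneg: "0 \<le> K"
  using u_bounded[of 0] by linarith

lemma sub_test_max: "u y - quad_test \<kappa> (\<beta> n) (Y n) y \<le> u (X n) - quad_test \<kappa> (\<beta> n) (Y n) (X n)"
  using doubled_max[where n=n and x=y and y="Y n"] by (simp add: doubling_penalty_def quad_test_def algebra_simps)

lemma super_test_min:
  "v (Y n) - quad_test (-\<kappa>) (-\<beta> n) (X n) (Y n) \<le> v y - quad_test (-\<kappa>) (-\<beta> n) (X n) y"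
  using doubled_max[where n=n and x="X n" and y=y]
  by (simp add: doubling_penalty_def quad_test_def algebra_simps norm_minus_commute)

lemma grads_bounded: "\<exists>R. \<forall>n. norm (grad_sub n) < R \<and> norm (grad_super n) < R"
proof -
  obtain D where D: "\<And>n. norm (X n - Y n) \<le> D"
    using X_minus_Y_Bseq by (auto simp: Bseq_def)
  obtain B where B: "\<And>n. norm (\<beta> n *\<^sub>R X n) \<le> B" "\<And>n. norm (\<beta> n *\<^sub>R Y n) \<le> B"
    using convergent_imp_bounded[OF \<beta>X_tendsto] convergent_imp_bounded[OF \<beta>Y_tendsto]
    unfolding bounded_iff by (metis (no_types, lifting) max.cobounded1 max.cobounded2 order_trans rangeI)
  have "norm (grad_sub n) \<le> 2 * \<kappa> * D + 2 * B" for n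
  proof -
    have "norm (grad_sub n) \<le> norm ((2 * \<kappa>) *\<^sub>R (X n - Y n)) + norm (2 *\<^sub>R (\<beta> n *\<^sub>R X n))"
      unfolding grad_sub_def quad_grad_def by (rule order_trans[OF _ norm_triangle_ineq]) simp
    also have "\<dots> = 2 * \<kappa> * norm (X n - Y n) + 2 * norm (\<beta> n *\<^sub>R X n)"
      using \<kappa>_nonneg by (simp add: abs_mult)
    also have "\<dots> \<le> 2 * \<kappa> * D + 2 * B"
      using mult_left_mono[OF D[of n], of "2 * \<kappa>"] B(1)[of n] \<kappa>_nonneg by simp
    finally show ?thesis .
  qed
  moreover have "norm (grad_super n) \<le> 2 * \<kappa> * D + 2 * B" for n
  proof -
    have "norm (grad_super n) \<le> norm ((2 * \<kappa>) *\<^sub>R (X n - Y n)) + norm (2 *\<^sub>R (\<beta> n *\<^sub>R Y n))"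
      unfolding grad_super_def quad_grad_def
      by (rule order_trans[OF _ norm_triangle_ineq4]) (simp add: algebra_simps)
    also have "\<dots> = 2 * \<kappa> * norm (X n - Y n) + 2 * norm (\<beta> n *\<^sub>R Y n)"
      using \<kappa>_nonneg by (simp add: abs_mult)
    also have "\<dots> \<le> 2 * \<kappa> * D + 2 * B"
      using mult_left_mono[OF D[of n], of "2 * \<kappa>"] B(2)[of n] \<kappa>_nonneg by simp
    finally show ?thesis .
  qed
  ultimately show ?thesis
    by (meson less_add_one order.strict_trans1)
qed

lemma grad_diff_tendsto_zero: "(\<lambda>n. grad_sub n - grad_super n) \<longlonglongrightarrow> 0"
proof -
  have "grad_sub n - grad_super n = 2 *\<^sub>R (\<beta> n *\<^sub>R X n + \<beta> n *\<^sub>R Y n)" for n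
    unfolding grad_sub_def grad_super_def quad_grad_def by (simp add: algebra_simps)
  moreover have "(\<lambda>n. 2 *\<^sub>R (\<beta> n *\<^sub>R X n + \<beta> n *\<^sub>R Y n)) \<longlonglongrightarrow> 2 *\<^sub>R (0 + 0)"
    by (intro tendsto_scaleR tendsto_add tendsto_const \<beta>X_tendsto \<beta>Y_tendsto)
  ultimately show ?thesis
    by simp
qed

lemma nonlocal_terms_bounded: "\<exists>A\<ge>0. \<forall>n \<delta>. 0 < \<delta> \<longrightarrow> L_sub n \<delta> \<le> A \<and> - A \<le> L_super n \<delta>"
proof -
  obtain R where R: "\<And>n. norm (grad_sub n) < R" "\<And>n. norm (grad_super n) < R"
    using grads_bounded by blast
  then have "0 < R"
    using norm_ge_zero[of "grad_sub 0"] by (meson le_less_trans)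
  then obtain C where C: "\<And>p. norm p < R \<Longrightarrow> (LINT z:{z. 0 < norm z}|\<mu>1. (norm (j1 p z))\<^sup>2) \<le> C"
    using sq_jump_integral_bounded by blast
  define A where "A = (\<kappa> + 1) * max C 0 + 2 * K * measure \<mu>2 {z. 0 < norm z}"
  have weighted: "(\<kappa> + \<beta> n) * (LINT z:{z. 0 < norm z}|\<mu>1. (norm (j1 p z))\<^sup>2) \<le> (\<kappa> + 1) * max C 0"
    if "norm p < R" for n p
    using C[OF that] sq_jump_integral_nonneg[of _ p] \<kappa>_nonneg \<beta>_pos[of n] \<beta>_le_1[of n]
    by (intro mult_mono) auto
  have "0 \<le> A"
    unfolding A_def using \<kappa>_nonneg K_nonneg by simp
  moreover have "L_sub n \<delta> \<le> A" if "0 < \<delta>" for n \<delta>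
    using L_split_quad_test_le_at_max[OF that u_measurable u_bounded sub_test_max[where n=n] grad_sub_def[of n]]
      weighted[OF R(1)[of n], of n] unfolding A_def by linarith
  moreover have "- A \<le> L_super n \<delta>" if "0 < \<delta>" for n \<delta>
    using L_split_quad_test_ge_at_min[OF that v_measurable v_bounded super_test_min[where n=n] grad_super_def[of n]]
      weighted[OF R(2)[of n], of n] unfolding A_def by (simp add: algebra_simps)
  ultimately show ?thesis
    by blast
qed

definition big_jump_error :: "nat \<Rightarrow> real" where
  "big_jump_error n = (LINT z:{z. 0 < norm z}|\<mu>1. \<kappa> * (norm (j1 (grad_sub n) z - j1 (grad_super n) z))\<^sup>2
      + \<beta> n * ((norm (j1 (grad_sub n) z))\<^sup>2 + (norm (j1 (grad_super n) z))\<^sup>2))"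

definition finite_jump_error :: "nat \<Rightarrow> real" where
  "finite_jump_error n = (LINT z:{z. 0 < norm z}|\<mu>2. min (4 * K)
      (max (doubling_penalty \<kappa> (\<beta> n) (X n + j2 (grad_sub n) z) (Y n + j2 (grad_super n) z)
            - doubling_penalty \<kappa> (\<beta> n) (X n) (Y n)) 0))"

definition small_jump_error :: "nat \<Rightarrow> real \<Rightarrow> real" where
  "small_jump_error n \<delta> = (\<kappa> + \<beta> n) *
     ((LINT z:{z. 0 < norm z \<and> norm z < \<delta>}|\<mu>1. (norm (j1 (grad_sub n) z))\<^sup>2)
      + (LINT z:{z. 0 < norm z \<and> norm z < \<delta>}|\<mu>1. (norm (j1 (grad_super n) z))\<^sup>2))"

lemma nonlocal_diff_le:
  assumes "0 < \<delta>"
  shows "L_sub n \<delta> - L_super n \<delta> \<le> small_jump_error n \<delta> + big_jump_error n + finite_jump_error n"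
proof -
  have "L_small \<mu>1 j1 \<delta> (quad_test \<kappa> (\<beta> n) (Y n)) (grad_sub n) (X n)
      - L_small \<mu>1 j1 \<delta> (quad_test (-\<kappa>) (-\<beta> n) (X n)) (grad_super n) (Y n) = small_jump_error n \<delta>"
    unfolding grad_sub_def grad_super_def small_jump_error_def L_small_quad_test
    by (simp add: algebra_simps)
  moreover have "L_big \<mu>1 j1 \<delta> u (grad_sub n) (X n) - L_big \<mu>1 j1 \<delta> v (grad_super n) (Y n)
      \<le> big_jump_error n"
    unfolding big_jump_error_def
    by (rule L_big_diff_le_at_doubled_max[OF assms \<kappa>_nonneg less_imp_le[OF \<beta>_pos] u_measurable
          u_bounded v_measurable v_bounded doubled_max grad_sub_def grad_super_def])
  moreover have "L_two \<mu>2 j2 u (grad_sub n) (X n) - L_two \<mu>2 j2 v (grad_super n) (Y n)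
      \<le> finite_jump_error n"
    unfolding finite_jump_error_def
    by (rule L_two_diff_le_at_doubled_max[OF u_measurable u_bounded v_measurable v_bounded doubled_max])
  ultimately show ?thesis
    by linarith
qed

lemma big_jump_error_tendsto_zero: "big_jump_error \<longlonglongrightarrow> 0"
proof -
  obtain R where R: "\<And>n. norm (grad_sub n) < R" "\<And>n. norm (grad_super n) < R"
    using grads_bounded by blast
  then have "0 < R"
    using norm_ge_zero[of "grad_sub 0"] by (meson le_less_trans)
  then obtain C where C: "\<And>p. norm p < R \<Longrightarrow> (LINT z:{z. 0 < norm z}|\<mu>1. (norm (j1 p z))\<^sup>2) \<le> C"
    using sq_jump_integral_bounded by blast
  define I where "I p = (LINT z:{z. 0 < norm z}|\<mu>1. (norm (j1 p z))\<^sup>2)" for p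
  have split: "big_jump_error n = \<kappa> * (LINT z:{z. 0 < norm z}|\<mu>1. (norm (j1 (grad_sub n) z - j1 (grad_super n) z))\<^sup>2)
      + \<beta> n * (I (grad_sub n) + I (grad_super n))" for n
    unfolding big_jump_error_def I_def
    using sq_jump_diff_integrable[of "grad_sub n" "grad_super n"]
      sq_jump_integrable[of "grad_sub n"] sq_jump_integrable[of "grad_super n"]
    by (simp add: set_integral_add set_integrable_mult_right)
  moreover have "norm (I (grad_sub n) + I (grad_super n)) \<le> 2 * C" for n
    using C[OF R(1)[of n]] C[OF R(2)[of n]] sq_jump_integral_nonneg[of "{z. 0 < norm z}" "grad_sub n"]
      sq_jump_integral_nonneg[of "{z. 0 < norm z}" "grad_super n"]
    unfolding I_def real_norm_def abs_le_iff by linarith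
  then have "Bseq (\<lambda>n. I (grad_sub n) + I (grad_super n))"
    by (rule BseqI')
  then have "(\<lambda>n. \<beta> n * (I (grad_sub n) + I (grad_super n))) \<longlonglongrightarrow> 0"
    by (rule bounded_bilinear.tendsto_zero_if_Bseq_right[OF bounded_bilinear_mult \<beta>_tendsto])
  moreover have "(\<lambda>n. LINT z:{z. 0 < norm z}|\<mu>1. (norm (j1 (grad_sub n) z - j1 (grad_super n) z))\<^sup>2)
      \<longlonglongrightarrow> 0"
    by (rule sq_jump_diff_integral_tendsto_zero[OF R grad_diff_tendsto_zero])
  ultimately show ?thesis
    unfolding split using tendsto_add[OF tendsto_mult[OF tendsto_const]] by fastforce
qed

lemma finite_jump_error_tendsto_zero: "finite_jump_error \<longlonglongrightarrow> 0"
proof -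
  obtain R where R: "\<And>n. norm (grad_sub n) < R" "\<And>n. norm (grad_super n) < R"
    using grads_bounded by blast
  show ?thesis
    unfolding finite_jump_error_def
    using R by (intro L_two_error_tendsto_zero[OF K_nonneg _ _ grad_diff_tendsto_zero X_minus_Y_Bseq
          \<beta>X_tendsto \<beta>Y_tendsto \<beta>_tendsto, where R=R]) (auto intro: less_imp_le)
qed

lemma small_jump_error_small:
  assumes "0 < e"
  shows "\<exists>\<delta>>0. small_jump_error n \<delta> < e"
proof -
  define e' where "e' = e / (2 * (\<kappa> + 1))"
  have "0 < e'"
    unfolding e'_def using assms \<kappa>_nonneg by simp
  then have "\<forall>\<^sub>F \<delta> in at_right 0.
      (LINT z:{z. 0 < norm z \<and> norm z < \<delta>}|\<mu>1. (norm (j1 (grad_sub n) z))\<^sup>2) < e'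
    \<and> (LINT z:{z. 0 < norm z \<and> norm z < \<delta>}|\<mu>1. (norm (j1 (grad_super n) z))\<^sup>2) < e'"
    by (intro eventually_conj small_jump_integral_eventually_small)
  then obtain b where "0 < b" and below_b: "\<And>\<delta>. 0 < \<delta> \<Longrightarrow> \<delta> < b \<Longrightarrow>
      (LINT z:{z. 0 < norm z \<and> norm z < \<delta>}|\<mu>1. (norm (j1 (grad_sub n) z))\<^sup>2) < e'
    \<and> (LINT z:{z. 0 < norm z \<and> norm z < \<delta>}|\<mu>1. (norm (j1 (grad_super n) z))\<^sup>2) < e'"
    unfolding eventually_at_right_field by auto
  define \<delta> where "\<delta> = b / 2"
  have "0 < \<delta>"
    using \<open>0 < b\<close> by (simp add: \<delta>_def)
  have small: "(LINT z:{z. 0 < norm z \<and> norm z < \<delta>}|\<mu>1. (norm (j1 (grad_sub n) z))\<^sup>2) < e'"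
      "(LINT z:{z. 0 < norm z \<and> norm z < \<delta>}|\<mu>1. (norm (j1 (grad_super n) z))\<^sup>2) < e'"
    using below_b[of \<delta>] \<open>0 < b\<close> by (simp_all add: \<delta>_def)
  have "small_jump_error n \<delta> \<le> (\<kappa> + 1) *
     ((LINT z:{z. 0 < norm z \<and> norm z < \<delta>}|\<mu>1. (norm (j1 (grad_sub n) z))\<^sup>2)
      + (LINT z:{z. 0 < norm z \<and> norm z < \<delta>}|\<mu>1. (norm (j1 (grad_super n) z))\<^sup>2))"
    unfolding small_jump_error_def using \<beta>_le_1[of n]
    by (intro mult_right_mono add_nonneg_nonneg sq_jump_integral_nonneg) auto
  also have "\<dots> < (\<kappa> + 1) * (2 * e')"
    using small \<kappa>_nonneg by (intro mult_strict_left_mono) auto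
  also have "\<dots> = e"
    unfolding e'_def using \<kappa>_nonneg by (simp add: field_simps)
  finally show ?thesis
    using \<open>0 < \<delta>\<close> by blast
qed

lemma nonlocal_close_exists:
  assumes "0 < \<eta>"
  obtains n \<delta> where "0 < \<delta>" "norm (grad_sub n - grad_super n) < \<eta>" "L_sub n \<delta> \<le> L_super n \<delta> + \<eta>"
proof -
  have norm_lim: "(\<lambda>n. norm (grad_sub n - grad_super n)) \<longlonglongrightarrow> 0"
    using grad_diff_tendsto_zero by (simp only: tendsto_norm_zero_iff)
  have "\<forall>\<^sub>F n in sequentially. norm (grad_sub n - grad_super n) < \<eta>
      \<and> big_jump_error n < \<eta> / 3 \<and> finite_jump_error n < \<eta> / 3"
    using assms by (intro eventually_conj order_tendstoD(2)[OF norm_lim]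
        order_tendstoD(2)[OF big_jump_error_tendsto_zero]
        order_tendstoD(2)[OF finite_jump_error_tendsto_zero]) auto
  then obtain n where n: "norm (grad_sub n - grad_super n) < \<eta>"
    "big_jump_error n < \<eta> / 3" "finite_jump_error n < \<eta> / 3"
    unfolding eventually_sequentially by blast
  obtain \<delta> where "0 < \<delta>" "small_jump_error n \<delta> < \<eta> / 3"
    using small_jump_error_small assms by (meson divide_pos_pos zero_less_numeral)
  with n nonlocal_diff_le[of \<delta> n] show ?thesis
    by (intro that[of \<delta> n]) auto
qed

lemma viscosity_gap_small:
  assumes "hypF1 F" "hypF3 F" "visc_sub F f \<mu>1 \<mu>2 j1 j2 u" "visc_super F f \<mu>1 \<mu>2 j1 j2 v"
    and strict: "\<And>a b p l. - K \<le> b \<Longrightarrow> b \<le> a \<Longrightarrow> a \<le> K \<Longrightarrow> \<gamma> * (a - b) \<le> F a p l - F b p l"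
    and ordered: "\<And>n. v (Y n) \<le> u (X n)" and "0 < K" "0 < e"
  shows "\<exists>n. \<gamma> * (u (X n) - v (Y n)) \<le> f (X n) - f (Y n) + e"
proof -
  obtain R where R: "\<And>n. norm (grad_sub n) < R" "\<And>n. norm (grad_super n) < R"
    using grads_bounded by blast
  obtain A where "0 \<le> A" and A: "\<And>n \<delta>. 0 < \<delta> \<Longrightarrow> L_sub n \<delta> \<le> A \<and> - A \<le> L_super n \<delta>"
    using nonlocal_terms_bounded by blast
  define r where "r = max R (A + 2)"
  have "0 < r"
    using \<open>0 \<le> A\<close> by (simp add: r_def)
  obtain s0 where "0 < s0" and F_close: "\<And>a p q l l'. \<bar>a\<bar> \<le> K \<Longrightarrow> norm p \<le> r \<Longrightarrow> norm q \<le> r \<Longrightarrow>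
      \<bar>l\<bar> \<le> r \<Longrightarrow> \<bar>l'\<bar> \<le> r \<Longrightarrow> norm (p - q) + \<bar>l - l'\<bar> < s0 \<Longrightarrow> \<bar>F a p l - F a q l'\<bar> < e"
    using hypF3_small_variation[OF \<open>hypF3 F\<close> \<open>0 < K\<close> \<open>0 < r\<close> \<open>0 < e\<close>] by blast
  define \<eta> where "\<eta> = min 1 (s0 / 3)"
  have "0 < \<eta>" "\<eta> \<le> 1" "2 * \<eta> < s0"
    using \<open>0 < s0\<close> by (auto simp: \<eta>_def)
  obtain n \<delta> where "0 < \<delta>" and close: "norm (grad_sub n - grad_super n) < \<eta>"
    "L_sub n \<delta> \<le> L_super n \<delta> + \<eta>"
    using nonlocal_close_exists[OF \<open>0 < \<eta>\<close>] by blast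
  have "norm (grad_sub n) \<le> r" "norm (grad_super n) \<le> r"
    using R[of n] by (auto simp: r_def)
  then have "\<gamma> * (u (X n) - v (Y n)) \<le> f (X n) - f (Y n) + e"
  proof (intro viscosity_inequalities_gap[OF \<open>hypF1 F\<close>, where r=r and \<eta>=\<eta> and A=A])
    show "\<gamma> * (u (X n) - v (Y n)) \<le> F (u (X n)) (grad_sub n) l - F (v (Y n)) (grad_sub n) l" for l
      by (rule strict) (use u_bounded[of "X n"] v_bounded[of "Y n"] ordered[of n] in \<open>auto simp: abs_le_iff\<close>)
    show "F (u (X n)) (grad_sub n) (L_sub n \<delta>) \<le> f (X n)"
      unfolding grad_sub_def by (rule visc_sub_at_quad_test_max[OF assms(3) \<open>0 < \<delta>\<close> sub_test_max])
    show "f (Y n) \<le> F (v (Y n)) (grad_super n) (L_super n \<delta>)"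
      unfolding grad_super_def by (rule visc_super_at_quad_test_min[OF assms(4) \<open>0 < \<delta>\<close> super_test_min])
  qed (use F_close[OF v_bounded] close A[OF \<open>0 < \<delta>\<close>] \<open>0 \<le> A\<close> \<open>0 < \<eta>\<close> \<open>\<eta> \<le> 1\<close> \<open>2 * \<eta> < s0\<close>
      in \<open>auto simp: r_def less_imp_le\<close>)
  then show ?thesis
    by blast
qed

end

section \<open>The comparison principle\<close>

context jump_operators
begin

lemma bounded_visc_sub_super:
  assumes "visc_sub F f \<mu>1 \<mu>2 j1 j2 u" "visc_super F f \<mu>1 \<mu>2 j1 j2 v"
  obtains K where "0 < K" "\<And>x. \<bar>u x\<bar> \<le> K" "\<And>x. \<bar>v x\<bar> \<le> K"
proof -
  obtain a b where "\<And>x. \<bar>u x\<bar> \<le> a" "\<And>x. \<bar>v x\<bar> \<le> b"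
    using assms unfolding visc_sub_def visc_super_def bounded_iff by (metis rangeI real_norm_def)
  then show ?thesis
    by (intro that[of "max a b + 1"]) (fastforce intro: order_trans)+
qed

lemma comparison_principle:
  fixes F :: "real \<Rightarrow> 'n \<Rightarrow> real \<Rightarrow> real" and f u v :: "'n \<Rightarrow> real"
  assumes "hypF1 F" "hypF2 F" "hypF3 F" "hypF4 f"
    and sub: "visc_sub F f \<mu>1 \<mu>2 j1 j2 u" and super: "visc_super F f \<mu>1 \<mu>2 j1 j2 v"
  shows "u x0 \<le> v x0"
proof (rule ccontr)
  assume "\<not> u x0 \<le> v x0"
  then have "v x0 < u x0"
    by simp
  obtain K where "0 < K" and u_bounded: "\<And>x. \<bar>u x\<bar> \<le> K" and v_bounded: "\<And>x. \<bar>v x\<bar> \<le> K"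
    using bounded_visc_sub_super[OF sub super] by blast
  have "usc u" "lsc v"
    using sub super unfolding visc_sub_def visc_super_def by blast+
  obtain \<gamma> where "0 < \<gamma>" and strict: "\<And>a b p l. - K \<le> b \<Longrightarrow> b \<le> a \<Longrightarrow> a \<le> K \<Longrightarrow>
      \<gamma> * (a - b) \<le> F a p l - F b p l"
    using \<open>hypF2 F\<close> \<open>0 < K\<close> unfolding hypF2_def by (elim allE[of _ K]) auto
  define e where "e = \<gamma> * (u x0 - v x0) / 4"
  have "0 < e"
    using \<open>0 < \<gamma>\<close> \<open>v x0 < u x0\<close> by (simp add: e_def)
  then obtain d where "0 < d" and f_close: "\<And>x y. dist x y < d \<Longrightarrow> dist (f x) (f y) < e"
    using \<open>hypF4 f\<close> unfolding hypF4_def uniformly_continuous_on_def by blast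
  \<comment> \<open>large enough that \<open>\<kappa> |X - Y|\<^sup>2 \<le> 2 K\<close> forces \<open>|X - Y| < d\<close>\<close>
  define \<kappa> where "\<kappa> = (4 * K + 1) / d\<^sup>2"
  obtain \<beta> X Y where \<beta>: "\<And>n. 0 < \<beta> n" "\<And>n. \<beta> n \<le> 1" "\<beta> \<longlonglongrightarrow> 0"
    and max: "\<And>n x y. u x - v y - doubling_penalty \<kappa> (\<beta> n) x y
                        \<le> u (X n) - v (Y n) - doubling_penalty \<kappa> (\<beta> n) (X n) (Y n)"
    and gap: "\<And>n. (u x0 - v x0) / 2 \<le> u (X n) - v (Y n) - doubling_penalty \<kappa> (\<beta> n) (X n) (Y n)"
    and lims: "(\<lambda>n. \<beta> n *\<^sub>R X n) \<longlonglongrightarrow> 0" "(\<lambda>n. \<beta> n *\<^sub>R Y n) \<longlonglongrightarrow> 0"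
    using doubled_maxima_sequence[OF \<open>usc u\<close> \<open>lsc v\<close> u_bounded v_bounded _ \<open>v x0 < u x0\<close>, of \<kappa>]
      \<open>0 < K\<close> by (auto simp: \<kappa>_def)
  have close: "(u x0 - v x0) / 2 \<le> u (X n) - v (Y n)" "norm (X n - Y n) < d" for n
    using doubled_max_close[OF _ \<open>0 < d\<close> _ _ gap[of n, unfolded \<kappa>_def]] \<open>0 < K\<close> \<beta>(1)[of n]
      u_bounded[of "X n"] v_bounded[of "Y n"] \<open>v x0 < u x0\<close> by (simp_all add: abs_le_iff)
  have "Bseq (\<lambda>n. X n - Y n)"
    using close(2) by (intro BseqI'[of _ d]) (simp add: less_imp_le)
  then interpret doubled_maxima \<mu>1 \<mu>2 j1 j2 u v K \<kappa> \<beta> X Y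
    using usc_borel_measurable[OF \<open>usc u\<close>] lsc_borel_measurable[OF \<open>lsc v\<close>] u_bounded v_bounded
      \<open>0 < K\<close> \<beta> max lims by unfold_locales (auto simp: \<kappa>_def)
  have "0 < (u x0 - v x0) / 2"
    using \<open>v x0 < u x0\<close> by simp
  then have "v (Y n) \<le> u (X n)" for n
    using close(1)[of n] by linarith
  then obtain n where "\<gamma> * (u (X n) - v (Y n)) \<le> f (X n) - f (Y n) + e"
    using viscosity_gap_small[OF \<open>hypF1 F\<close> \<open>hypF3 F\<close> sub super strict _ \<open>0 < K\<close> \<open>0 < e\<close>] by blast
  moreover have "f (X n) - f (Y n) < e"
    using f_close[of "X n" "Y n"] close(2)[of n] by (simp add: dist_norm abs_less_iff)
  moreover have "\<gamma> * ((u x0 - v x0) / 2) \<le> \<gamma> * (u (X n) - v (Y n))"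
    using close(1)[of n] \<open>0 < \<gamma>\<close> by (intro mult_left_mono) auto
  ultimately show False
    by (simp add: e_def)
qed

end

lemma quasilinear_hyps:
  "hypF1 (\<lambda>w (p::'n::euclidean_space) l. w - l)" "hypF2 (\<lambda>w (p::'n) l. w - l)"
  "hypF3 (\<lambda>w (p::'n) l. w - l)"
proof -
  have "continuous_on UNIV (\<lambda>(w :: real, p :: 'n, l :: real). w - l)"
    unfolding case_prod_unfold by (intro continuous_intros)
  then show "hypF1 (\<lambda>w (p::'n) l. w - l)"
    unfolding hypF1_def by auto
  show "hypF2 (\<lambda>w (p::'n) l. w - l)"
    unfolding hypF2_def by (intro allI impI exI[of _ 1]) auto
  have "modulus (\<lambda>s. s)"
    unfolding modulus_def by (auto intro: tendsto_ident_at)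
  then show "hypF3 (\<lambda>w (p::'n) l. w - l)"
    unfolding hypF3_def by (intro allI impI exI[of _ "\<lambda>s. s"]) (auto simp: abs_minus_commute)
qed

theorem theorem2p1:
  fixes \<mu>1 \<mu>2 :: "'z::euclidean_space measure"
    and j1 j2 :: "'n::euclidean_space \<Rightarrow> 'z \<Rightarrow> 'n"
    and f :: "'n \<Rightarrow> real"
  assumes radon1: "radon_punctured \<mu>1" and radon2: "radon_punctured \<mu>2"
    and j1_meas: "(\<lambda>(p, z). j1 p z) \<in> borel_measurable borel"
    and j2_meas: "(\<lambda>(p, z). j2 p z) \<in> borel_measurable borel"
    and M: "hypM \<mu>1 \<mu>2"
    and J1: "hypJ1 \<mu>1 \<mu>2 j1 j2"
    and J2: "hypJ2 \<mu>1 j1"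
    and F4: "hypF4 f"
  shows "(\<forall>u v. visc_sub (\<lambda>w p l. w - l) f \<mu>1 \<mu>2 j1 j2 u
                 \<and> visc_super (\<lambda>w p l. w - l) f \<mu>1 \<mu>2 j1 j2 v
                 \<longrightarrow> (\<forall>x. u x \<le> v x))
       \<and> (\<forall>F. hypF1 F \<and> hypF2 F \<and> hypF3 F \<longrightarrow>
            (\<forall>u v. visc_sub F f \<mu>1 \<mu>2 j1 j2 u \<and> visc_super F f \<mu>1 \<mu>2 j1 j2 v
                 \<longrightarrow> (\<forall>x. u x \<le> v x)))"
proof -
  interpret jump_operators \<mu>1 \<mu>2 j1 j2
    using radon1 radon2 j1_meas j2_meas M J1 J2
    by unfold_locales (auto simp: radon_punctured_def)
  show ?thesis
    using comparison_principle[OF _ _ _ F4] quasilinear_hyps by blast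
qed

end
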